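(* Let $\mathbf k$ be an algebraically closed field of characteristic $p>0$ and $S=\mathbf k[x_1,\dots,x_n]$. An ideal $I\subseteq S$ is $\mathrm{GL}_n(\mathbf k)$-invariant if and only if $I=I_B$ for some finite subset $B\subseteq C(n,p)$, i.e. if and only if $I$ is a (finite) sum of carry ideals $I_{c,d}$.
   Context: $\mathrm{GL}_n(\mathbf k)$ acts on $S$ by $\mathbf k$-algebra automorphisms, $g=(g_{i,j})$ sending $x_i\mapsto \sum_k g_{k,i}x_k$; an ideal $I$ is invariant if $g\cdot I\subseteq I$ for all $g$. Base-$p$ expansion: $a=\sum_j a_jp^j$, $0\le a_j\le p-1$; for $d\ge1$, $M=\max\{j:d_j\ne0\}$. For a monomial $x^{\underline b}=x_1^{b_1}\cdots x_n^{b_n}$ of degree $d$, with $b_{i,j}$ the $j$-th base-$p$ digit of $b_i$, the carry pattern $c(\underline b)=(c_1,\dots,c_M)$ is defined by $\sum_{i=1}^n\sum_{0\le j<\ell}b_{i,j}p^j=c_\ell p^\ell+\sum_{0\le j<\ell}d_jp^j$ for $1\le\ell\le M$ (convention $c_i=0$ for $i<1$, $i>M$). $C(d,n,p)$ is the set of carry patterns of degree-$d$ monomials in $n$ variables, partially ordered componentwise, and $C(n,p)=\bigsqcup_{d\ge0}C(d,n,p)$. For $c\in C(d,n,p)$, the carry ideal $I_{c,d}$ is the ideal of $S$ generated by all monomials of degree $d$ whose carry pattern is $\le c$. For finite $B\subseteq C(n,p)$, writing $B_d=B\cap C(d,n,p)$, set $I_B=\sum_{d\ge0}\sum_{c\in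 B_d}I_{c,d}$. *)

theory Defs
  imports "HOL-Computational_Algebra.Polynomial" "HOL-Library.Poly_Mapping"
begin

(* Polynomial ring S = k[x_i | i :: 'n] in n = CARD('n) variables, represented as
  finitely supported maps from monomials (exponent vectors 'n \<Rightarrow>\<^sub>0 nat) to coefficients.
  Multiplication is the convolution product from Poly_Mapping. *)

type_synonym ('n, 'k) mpoly = "('n \<Rightarrow>\<^sub>0 nat) \<Rightarrow>\<^sub>0 'k"

definition monomial_x :: "('n \<Rightarrow>\<^sub>0 nat) \<Rightarrow> ('n, 'k::field) mpoly" where
  "monomial_x m = Poly_Mapping.single m 1"

definition var :: "'n \<Rightarrow> ('n, 'k::field) mpoly" where
  "var i = monomial_x (Poly_Mapping.single i 1)"

definition cst :: "'k::field \<Rightarrow> ('n, 'k) mpoly" where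
  "cst c = Poly_Mapping.single 0 c"

definition is_ideal :: "('n, 'k::field) mpoly set \<Rightarrow> bool" where
  "is_ideal I \<longleftrightarrow> 0 \<in> I \<and> (\<forall>a\<in>I. \<forall>b\<in>I. a + b \<in> I) \<and> (\<forall>a\<in>I. \<forall>r. r * a \<in> I)"

definition ideal_gen :: "('n, 'k::field) mpoly set \<Rightarrow> ('n, 'k) mpoly set" where
  "ideal_gen G = \<Inter>{I. is_ideal I \<and> G \<subseteq> I}"

definition GL :: "('n::finite \<Rightarrow> 'n \<Rightarrow> 'k::field) set" where
  "GL = {g. \<exists>h. (\<forall>i j. (\<Sum>l\<in>UNIV. g i l * h l j) = (if i = j then 1 else 0))
                 \<and> (\<forall>i j. (\<Sum>l\<in>UNIV. h i l * g l j) = (if i = j then 1 else 0))}"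

definition act :: "('n::finite \<Rightarrow> 'n \<Rightarrow> 'k::field) \<Rightarrow> ('n, 'k) mpoly \<Rightarrow> ('n, 'k) mpoly" where
  "act g f = (\<Sum>m\<in>Poly_Mapping.keys f.
      cst (Poly_Mapping.lookup f m) *
      (\<Prod>i\<in>UNIV. (\<Sum>k\<in>UNIV. cst (g k i) * var k) ^ Poly_Mapping.lookup m i))"

definition GL_invariant :: "('n::finite, 'k::field) mpoly set \<Rightarrow> bool" where
  "GL_invariant I \<longleftrightarrow> (\<forall>g\<in>GL. act g ` I \<subseteq> I)"

definition digit :: "nat \<Rightarrow> nat \<Rightarrow> nat \<Rightarrow> nat" where
  "digit p a j = a div p ^ j mod p"

definition topdeg :: "nat \<Rightarrow> nat \<Rightarrow> nat" where
  "topdeg p d = Max {j. digit p d j \<noteq> 0}"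

definition mdeg :: "('n::finite \<Rightarrow>\<^sub>0 nat) \<Rightarrow> nat" where
  "mdeg b = (\<Sum>i\<in>UNIV. Poly_Mapping.lookup b i)"

(* Carry pattern of a monomial x^b of degree d = mdeg b, as a function of l,
  equal to 0 outside 1..M (and identically 0 when d = 0, the empty pattern).
  c_l is the unique value with
  \<Sum>_i \<Sum>_{j<l} b_{i,j} p^j = c_l p^l + \<Sum>_{j<l} d_j p^j. *)
definition carry :: "nat \<Rightarrow> ('n::finite \<Rightarrow>\<^sub>0 nat) \<Rightarrow> nat \<Rightarrow> nat" where
  "carry p b l = (let d = mdeg b in
     if d \<ge> 1 \<and> 1 \<le> l \<and> l \<le> topdeg p d then
       ((\<Sum>i\<in>UNIV. \<Sum>j<l. digit p (Poly_Mapping.lookup b i) j * p ^ j)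
          - (\<Sum>j<l. digit p d j * p ^ j)) div p ^ l
     else 0)"

(* C(d,n,p), and C(n,p) as the disjoint union of pairs (d, c). *)
definition carry_patterns :: "'n::finite itself \<Rightarrow> nat \<Rightarrow> nat \<Rightarrow> (nat \<Rightarrow> nat) set" where
  "carry_patterns _ p d = {carry p (b :: 'n \<Rightarrow>\<^sub>0 nat) | b. mdeg b = d}"

definition all_carry_patterns :: "'n::finite itself \<Rightarrow> nat \<Rightarrow> (nat \<times> (nat \<Rightarrow> nat)) set" where
  "all_carry_patterns T p = {(d, c). c \<in> carry_patterns T p d}"

(* Carry ideal I_{c,d}; componentwise order on patterns is the pointwise order. *)
definition carry_ideal :: "nat \<Rightarrow> nat \<Rightarrow> (nat \<Rightarrow> nat) \<Rightarrow> ('n::finite, 'k::field) mpoly set" where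
  "carry_ideal p d c = ideal_gen {monomial_x b | b. mdeg b = d \<and> carry p b \<le> c}"

definition carry_sum_ideal :: "nat \<Rightarrow> (nat \<times> (nat \<Rightarrow> nat)) set \<Rightarrow> ('n::finite, 'k::field) mpoly set" where
  "carry_sum_ideal p B = ideal_gen (\<Union>(d, c)\<in>B. carry_ideal p d c)"

end

theory Submission
  imports Defs
begin

(* A monomial x^b determines its carry pattern through the truncated sums
   low_sum p b l = \<Sum>i. b_i mod p^l, and in characteristic p linear substitutions can only
   lower them, since by Frobenius (\<Sum>k g_k x_k)^e is the (e mod p^l)-th power times a
   polynomial whose exponents are all divisible by p^l. Hence carry ideals and their sums
   are GL_n-invariant.

   Conversely, let I be invariant. Diagonal matrices and interpolation over the infinite
   field show that I is spanned by monomials. The substitution x_j \<mapsto> x_j + x_i sends x^b to a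
   polynomial containing the monomial obtained by moving p^c from b_j to b_i, with coefficient
   (b_j choose p^c), which is nonzero mod p exactly when the c-th digit of b_j is nonzero
   (Lucas). A combinatorial argument on base-p digits shows that such moves lead from x^b
   to every monomial of the same degree with smaller low sums, i.e. with smaller carry
   pattern. So I contains the carry ideal of each of its monomials, and by Dickson's lemma
   finitely many of them generate I. *)

section \<open>Base-p digits\<close>

lemma digit_less: "p > 0 \<Longrightarrow> digit p a j < p"
  by (simp add: digit_def)

lemma digit_shift: "digit p (x div p ^ N) j = digit p x (N + j)"
  by (simp add: digit_def div_mult2_eq power_add)

lemma mod_power_eq_digit_sum:
  assumes "p > 0"
  shows "a mod p ^ l = (\<Sum>j<l. digit p a j * p ^ j)"
proof (induction l)
  case (Suc l)
  have "a mod (p ^ l * p) = p ^ l * (a div p ^ l mod p) + a mod p ^ l"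
    by (rule mod_mult2_eq)
  then show ?case using Suc by (simp add: digit_def mult.commute)
qed simp

lemma less_self_power: "(p::nat) > 1 \<Longrightarrow> n < p ^ n"
  using less_exp[of n] power_mono[of 2 p n] by linarith

lemma eq_if_digits_eq:
  assumes "p > 1" "\<And>j. digit p a j = digit p b j"
  shows "a = b"
proof -
  have "a = a mod p ^ (a + b)" "b = b mod p ^ (a + b)"
    using less_self_power[OF assms(1), of "a + b"] by auto
  then show ?thesis
    using assms by (simp add: mod_power_eq_digit_sum[of p])
qed

lemma less_power_iff_high_digits_0:
  assumes "p > 1"
  shows "x < p ^ N \<longleftrightarrow> (\<forall>m\<ge>N. digit p x m = 0)"
proof
  assume x: "x < p ^ N"
  show "\<forall>m\<ge>N. digit p x m = 0"
  proof (intro allI impI)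
    fix m assume "N \<le> m"
    then have "x < p ^ m"
      using x assms by (metis less_le_trans one_less_power power_increasing_iff le_less)
    then show "digit p x m = 0"
      by (simp add: digit_def)
  qed
next
  assume high: "\<forall>m\<ge>N. digit p x m = 0"
  have "x div p ^ N = 0"
  proof (rule eq_if_digits_eq[OF assms])
    fix j
    show "digit p (x div p ^ N) j = digit p 0 j"
      using high by (simp add: digit_shift) (simp add: digit_def)
  qed
  then show "x < p ^ N"
    using assms by (simp add: div_eq_0_iff)
qed

lemma less_power_Suc_topdeg:
  assumes "p > 1"
  shows "d < p ^ Suc (topdeg p d)"
proof -
  have "{j. digit p d j \<noteq> 0} \<subseteq> {..<d}"
    using less_power_iff_high_digits_0[OF assms, of d d] less_self_power[OF assms, of d]
    by (auto simp: not_less[symmetric])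
  then have "finite {j. digit p d j \<noteq> 0}"
    by (rule finite_subset) simp
  then show ?thesis
    unfolding less_power_iff_high_digits_0[OF assms] topdeg_def
    by (auto dest: Max_ge)
qed

lemma digit_split:
  assumes "p > 0" "lo < p ^ k" "t < p"
  shows "digit p (lo + p ^ k * (t + p * h)) m =
    (if m < k then digit p lo m else if m = k then t else digit p h (m - Suc k))"
proof (cases "m < k")
  case True
  have "p ^ k = p ^ m * (p * p ^ (k - Suc m))"
    using True by (simp flip: power_add power_Suc)
  then have "(lo + p ^ k * (t + p * h)) div p ^ m = lo div p ^ m + p * (p ^ (k - Suc m) * (t + p * h))"
    using assms(1) by (simp add: mult.assoc)
  then show ?thesis
    using True by (simp add: digit_def)
next
  case False
  have "digit p (lo + p ^ k * (t + p * h)) m = digit p (t + p * h) (m - k)"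
    using digit_shift[of p "lo + p ^ k * (t + p * h)" k "m - k"] False assms by simp
  also have "\<dots> = (if m = k then t else digit p h (m - Suc k))"
  proof (cases "m = k")
    case False
    with \<open>\<not> m < k\<close> have "m - k = Suc (m - Suc k)"
      by simp
    then show ?thesis
      using False assms by (simp add: digit_def div_mult2_eq)
  qed (use assms in \<open>simp add: digit_def\<close>)
  finally show ?thesis
    using False by simp
qed

lemma digit_expansion: "x = x mod p ^ k + p ^ k * (digit p x k + p * (x div p ^ Suc k))"
proof -
  have "x div p ^ k = x div p ^ k mod p + p * (x div p ^ k div p)"
    by simp
  also have "x div p ^ k div p = x div p ^ Suc k"
    by (metis div_mult2_eq power_Suc2)
  finally show ?thesis
    unfolding digit_def by (metis mod_mult_div_eq)
qed

lemma digit_add_mult_power: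
  assumes p: "p > 0" and t: "digit p x k + t < p"
  shows "digit p (x + t * p ^ k) m = digit p x m + (if m = k then t else 0)"
proof -
  define lo h where "lo = x mod p ^ k" "h = x div p ^ Suc k"
  have lo: "lo < p ^ k"
    using p by (simp add: lo_h_def)
  have x: "x = lo + p ^ k * (digit p x k + p * h)"
    unfolding lo_h_def by (rule digit_expansion)
  then have "x + t * p ^ k = lo + p ^ k * ((digit p x k + t) + p * h)"
    by (simp add: algebra_simps)
  then show ?thesis
    using digit_split[OF p lo t, of h m] digit_split[OF p lo digit_less[OF p, of x k], of h m, folded x]
    by simp
qed

lemma digit_diff_mult_power:
  assumes p: "p > 0" and t: "t \<le> digit p x k"
  shows "t * p ^ k \<le> x" and "digit p (x - t * p ^ k) m = digit p x m - (if m = k then t else 0)"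
proof -
  define lo h where "lo = x mod p ^ k" "h = x div p ^ Suc k"
  have lo: "lo < p ^ k"
    using p by (simp add: lo_h_def)
  have x: "x = lo + p ^ k * (digit p x k + p * h)"
    unfolding lo_h_def by (rule digit_expansion)
  have x': "x = lo + p ^ k * digit p x k + p ^ k * (p * h)"
    using x by (simp only: distrib_left add.assoc)
  have le: "t * p ^ k \<le> p ^ k * digit p x k"
    using t by simp
  with x' show "t * p ^ k \<le> x"
    by linarith
  have "p ^ k * (digit p x k - t) = p ^ k * digit p x k - t * p ^ k"
    by (simp add: diff_mult_distrib2 mult.commute)
  with x' le have "x - t * p ^ k = lo + (p ^ k * (digit p x k - t) + p ^ k * (p * h))"
    by linarith
  then have "x - t * p ^ k = lo + p ^ k * ((digit p x k - t) + p * h)"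
    by (simp only: distrib_left)
  then show "digit p (x - t * p ^ k) m = digit p x m - (if m = k then t else 0)"
    using digit_split[OF p lo, of "digit p x k - t" h m] digit_less[OF p, of x k]
      digit_split[OF p lo digit_less[OF p, of x k], of h m, folded x]
    by simp
qed

lemma digit_add_power_carry:
  assumes p: "p > 0" and k: "digit p x k = p - 1" and Suc_k: "digit p x (Suc k) + 1 < p"
  shows "digit p (x + p ^ k) m = (if m = k then 0 else digit p x m + (if m = Suc k then 1 else 0))"
proof -
  define y where "y = x - (p - 1) * p ^ k"
  have "(p - 1) * p ^ k \<le> x"
    using digit_diff_mult_power(1)[OF p, of "p - 1" x k] k by simp
  moreover have "(p - 1) * p ^ k + p ^ k = 1 * p ^ Suc k"
    using p by (simp add: algebra_simps)
  ultimately have x: "x + p ^ k = y + 1 * p ^ Suc k"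
    unfolding y_def by linarith
  have dy: "digit p y m = digit p x m - (if m = k then p - 1 else 0)" for m
    unfolding y_def using digit_diff_mult_power(2)[OF p, of "p - 1" x k] k by simp
  have "digit p y (Suc k) + 1 < p"
    using dy[of "Suc k"] Suc_k by simp
  then show ?thesis
    unfolding x using digit_add_mult_power[OF p, of y "Suc k" 1 m] dy k by auto
qed

section \<open>Moving digits between exponents\<close>

definition column_sum :: "nat \<Rightarrow> ('n::finite \<Rightarrow> nat) \<Rightarrow> nat \<Rightarrow> nat" where
  "column_sum p f k = (\<Sum>i\<in>UNIV. digit p (f i) k)"

(* low_sum p b l is the left-hand side \<Sum>i. \<Sum>j<l. b_{i,j} p^j of the equation defining the carry
   pattern; see carry_eq_low_sum_div. *)
definition low_sum :: "nat \<Rightarrow> ('n::finite \<Rightarrow> nat) \<Rightarrow> nat \<Rightarrow> nat" where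
  "low_sum p f l = (\<Sum>i\<in>UNIV. f i mod p ^ l)"

definition move :: "('n \<Rightarrow> nat) \<Rightarrow> 'n \<Rightarrow> 'n \<Rightarrow> nat \<Rightarrow> 'n \<Rightarrow> nat" where
  "move f i j a = f(i := f i + a, j := f j - a)"

(* The effect of x_j \<mapsto> x_j + x_i on the exponent vector of a monomial, restricted to the
   moves whose binomial coefficient survives in characteristic p. *)
definition digit_move :: "nat \<Rightarrow> ('n \<Rightarrow> nat) \<Rightarrow> ('n \<Rightarrow> nat) \<Rightarrow> bool" where
  "digit_move p f g \<longleftrightarrow> (\<exists>i j k. i \<noteq> j \<and> digit p (f j) k \<noteq> 0 \<and> g = move f i j (p ^ k))"

lemma digit_moveI: "i \<noteq> j \<Longrightarrow> digit p (f j) k \<noteq> 0 \<Longrightarrow> digit_move p f (move f i j (p ^ k))"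
  unfolding digit_move_def by blast

lemma sum_UNIV_pair:
  fixes h :: "'n::finite \<Rightarrow> 'a::comm_monoid_add"
  assumes "i \<noteq> j"
  shows "sum h UNIV = h i + h j + sum h (UNIV - {i, j})"
  using assms by (simp add: sum.remove[of UNIV i] sum.remove[of "UNIV - {i}" j] Diff_insert2[symmetric]
      insert_commute add.assoc)

lemma move_other: "r \<noteq> i \<Longrightarrow> r \<noteq> j \<Longrightarrow> move f i j a r = f r"
  by (simp add: move_def)

lemma sum_move:
  fixes f :: "'n::finite \<Rightarrow> nat" and F :: "'n \<Rightarrow> nat \<Rightarrow> 'a::comm_monoid_add"
  assumes "i \<noteq> j"
  shows "(\<Sum>r\<in>UNIV. F r (move f i j a r)) + (F i (f i) + F j (f j))
       = (\<Sum>r\<in>UNIV. F r (f r)) + (F i (f i + a) + F j (f j - a))"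
  using assms by (simp add: sum_UNIV_pair[OF assms] move_def move_other add_ac)

lemma column_sum_move:
  assumes "i \<noteq> j"
  shows "column_sum p (move f i j a) m + (digit p (f i) m + digit p (f j) m)
       = column_sum p f m + (digit p (f i + a) m + digit p (f j - a) m)"
  unfolding column_sum_def using sum_move[OF assms, of "\<lambda>_ x. digit p x m" f a] by simp

lemma sum_digit_move:
  fixes f g :: "'n::finite \<Rightarrow> nat"
  assumes "digit_move p f g"
  shows "sum g UNIV = sum f UNIV"
proof -
  obtain i j k where ij: "i \<noteq> j" and j: "digit p (f j) k \<noteq> 0" and g: "g = move f i j (p ^ k)"
    using assms unfolding digit_move_def by blast
  have "p ^ k \<le> f j"
    using digit_diff_mult_power(1)[of p 1 "f j" k] j
    by (cases "p = 0") (auto simp: digit_def power_0_left split: if_splits)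
  then show ?thesis
    using sum_move[OF ij, of "\<lambda>_ x. x" f "p ^ k"] g by simp
qed

lemma sum_digit_moves:
  fixes f g :: "'n::finite \<Rightarrow> nat"
  shows "(digit_move p)\<^sup>*\<^sup>* f g \<Longrightarrow> sum g UNIV = sum f UNIV"
  by (induction rule: rtranclp_induct) (auto dest: sum_digit_move)

lemma low_sum_Suc:
  assumes "p > 0"
  shows "low_sum p f (Suc l) = low_sum p f l + column_sum p f l * p ^ l"
proof -
  have "x mod p ^ Suc l = x mod p ^ l + digit p x l * p ^ l" for x
    using mod_power_eq_digit_sum[OF assms, of x "Suc l"] mod_power_eq_digit_sum[OF assms, of x l]
    by simp
  then show ?thesis
    by (simp add: low_sum_def column_sum_def sum.distrib sum_distrib_right)
qed

lemma low_sums_eq_iff_column_sums_eq: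
  assumes p: "p > 0"
  shows "(\<forall>l. low_sum p f l = low_sum p g l) \<longleftrightarrow> (\<forall>k. column_sum p f k = column_sum p g k)"
proof
  assume eq: "\<forall>l. low_sum p f l = low_sum p g l"
  show "\<forall>k. column_sum p f k = column_sum p g k"
  proof
    fix k
    have "column_sum p f k * p ^ k = column_sum p g k * p ^ k"
      using low_sum_Suc[OF p, of f k] low_sum_Suc[OF p, of g k] eq[rule_format, of k] eq[rule_format, of "Suc k"]
      by linarith
    then show "column_sum p f k = column_sum p g k"
      using p by simp
  qed
next
  assume cs: "\<forall>k. column_sum p f k = column_sum p g k"
  show "\<forall>l. low_sum p f l = low_sum p g l"
  proof
    fix l
    show "low_sum p f l = low_sum p g l"
      by (induction l) (simp_all add: low_sum_def[of p _ 0] low_sum_Suc[OF p] cs)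
  qed
qed

lemma column_sum_le:
  fixes f :: "'n::finite \<Rightarrow> nat"
  assumes "p > 0"
  shows "column_sum p f k \<le> card (UNIV :: 'n set) * (p - 1)"
proof -
  have "digit p (f i) k \<le> p - 1" for i
    using digit_less[OF assms, of "f i" k] by linarith
  then show ?thesis
    unfolding column_sum_def using sum_bounded_above[of UNIV "\<lambda>i. digit p (f i) k" "p - 1"] by simp
qed

lemma less_power_sum:
  fixes f :: "'n::finite \<Rightarrow> nat"
  assumes "p > 1" "sum f UNIV \<le> l"
  shows "f i < p ^ l"
proof -
  have "f i \<le> sum f UNIV"
    by (rule member_le_sum) simp_all
  also have "\<dots> < p ^ sum f UNIV"
    using less_self_power[OF assms(1)] .
  also have "\<dots> \<le> p ^ l"
    using assms by (simp add: power_increasing)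
  finally show ?thesis .
qed

lemma digit_eq_0_beyond_sum:
  fixes f :: "'n::finite \<Rightarrow> nat"
  assumes "p > 1" "sum f UNIV \<le> m"
  shows "digit p (f i) m = 0"
  using less_power_sum[OF assms(1) order_refl, of f i] less_power_iff_high_digits_0[OF assms(1)] assms(2)
  by blast

lemma low_sum_eq_sum:
  fixes f :: "'n::finite \<Rightarrow> nat"
  assumes "p > 1" "sum f UNIV \<le> l"
  shows "low_sum p f l = sum f UNIV"
  unfolding low_sum_def using less_power_sum[OF assms] by simp

lemma low_sum_gap:
  assumes "sum f UNIV = sum f' UNIV" and less: "low_sum p f' l < low_sum p f l"
  shows "low_sum p f' l + p ^ l \<le> low_sum p f l"
proof -
  have "low_sum p f l mod p ^ l = low_sum p f' l mod p ^ l"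
    unfolding low_sum_def using assms(1) by (simp add: mod_sum_eq)
  then have "p ^ l dvd low_sum p f l - low_sum p f' l"
    using less by (simp add: mod_eq_dvd_iff_nat)
  then show ?thesis
    using less by (auto dest: dvd_imp_le)
qed

lemma low_sum_less_imp_less_sum:
  fixes f f' :: "'n::finite \<Rightarrow> nat"
  assumes "p > 1" "sum f UNIV = sum f' UNIV" "low_sum p f' l < low_sum p f l"
  shows "l < sum f UNIV"
  using low_sum_eq_sum[OF assms(1), of f l] low_sum_eq_sum[OF assms(1), of f' l] assms(2,3)
  by (metis less_irrefl not_less)

lemma digit_plain_move:
  assumes p: "p > 0" and ij: "i \<noteq> j" and j: "digit p (f j) k \<noteq> 0" and i: "digit p (f i) k + 1 < p"
  shows "digit p (move f i j (p ^ k) r) m =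
    digit p (f r) m + (if r = i \<and> m = k then 1 else 0) - (if r = j \<and> m = k then 1 else 0)"
  using digit_add_mult_power[OF p i, of m] digit_diff_mult_power(2)[OF p, of 1 "f j" k m] j ij
  by (cases "r = i"; cases "r = j") (auto simp: move_def)

lemma column_sum_plain_move:
  assumes p: "p > 0" and ij: "i \<noteq> j" and j: "digit p (f j) k \<noteq> 0" and i: "digit p (f i) k + 1 < p"
  shows "column_sum p (move f i j (p ^ k)) m = column_sum p f m"
  using column_sum_move[OF ij, of p f "p ^ k" m] digit_add_mult_power[OF p i, of m]
    digit_diff_mult_power(2)[OF p, of 1 "f j" k m] j
  by (simp split: if_splits)

lemma low_sum_carry_move:
  assumes p: "p > 0" and ij: "i \<noteq> j" and j: "digit p (f j) k \<noteq> 0"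
    and i: "digit p (f i) k = p - 1" and i_Suc: "digit p (f i) (Suc k) + 1 < p"
  shows "low_sum p (move f i j (p ^ k)) l + (if l = Suc k then p ^ Suc k else 0) = low_sum p f l"
proof -
  define g where "g = move f i j (p ^ k)"
  have cs: "column_sum p g m + (digit p (f i) m + digit p (f j) m) =
      column_sum p f m + ((if m = k then 0 else digit p (f i) m + (if m = Suc k then 1 else 0))
        + (digit p (f j) m - (if m = k then 1 else 0)))" for m
    using column_sum_move[OF ij, of p f "p ^ k" m] digit_add_power_carry[OF p i i_Suc, of m]
      digit_diff_mult_power(2)[OF p, of 1 "f j" k m] j
    unfolding g_def by simp
  have col_k: "column_sum p g k + p = column_sum p f k"
    using cs[of k] i j p by simp
  have col_Suc_k: "column_sum p g (Suc k) = column_sum p f (Suc k) + 1"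
    using cs[of "Suc k"] by simp
  have col_other: "column_sum p g m = column_sum p f m" if "m \<noteq> k" "m \<noteq> Suc k" for m
    using cs[of m] that by simp
  show ?thesis
    unfolding g_def[symmetric]
  proof (induction l)
    case (Suc l)
    then show ?case
      using col_Suc_k col_other[of l] low_sum_Suc[OF p, of g l] low_sum_Suc[OF p, of f l]
      by (cases "l = k"; cases "l = Suc k") (auto simp: algebra_simps simp flip: col_k)
  qed (simp add: low_sum_def)
qed

lemma sum_eq_imp_exists_greater:
  fixes a b :: "'a \<Rightarrow> nat"
  assumes "finite A" "sum a A = sum b A" "x \<in> A" "a x < b x"
  shows "\<exists>y\<in>A. b y < a y"
proof (rule ccontr)
  assume "\<not> ?thesis"
  then have "sum a A < sum b A"
    using assms by (intro sum_strict_mono_ex1) (auto simp: not_less)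
  with assms(2) show False
    by simp
qed

lemma exists_digit_deficit_and_surplus:
  fixes f f' :: "'n::finite \<Rightarrow> nat"
  assumes p: "p > 1" and ne: "f \<noteq> f'" and cs: "\<And>k. column_sum p f k = column_sum p f' k"
  shows "\<exists>i j k. digit p (f i) k < digit p (f' i) k \<and> digit p (f' j) k < digit p (f j) k"
proof -
  obtain i0 k where ne_k: "digit p (f i0) k \<noteq> digit p (f' i0) k"
    using ne eq_if_digits_eq[OF p] by blast
  have sum_eq: "(\<Sum>i\<in>UNIV. digit p (f i) k) = (\<Sum>i\<in>UNIV. digit p (f' i) k)"
    using cs[of k] by (simp add: column_sum_def)
  consider "digit p (f i0) k < digit p (f' i0) k" | "digit p (f' i0) k < digit p (f i0) k"
    using ne_k by linarith
  then show ?thesis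
  proof cases
    case 1
    with sum_eq_imp_exists_greater[OF finite_UNIV sum_eq UNIV_I 1] show ?thesis
      by blast
  next
    case 2
    with sum_eq_imp_exists_greater[OF finite_UNIV sum_eq[symmetric] UNIV_I 2] show ?thesis
      by blast
  qed
qed

definition digit_excess :: "nat \<Rightarrow> nat \<Rightarrow> ('n::finite \<Rightarrow> nat) \<Rightarrow> ('n \<Rightarrow> nat) \<Rightarrow> nat" where
  "digit_excess p N f' g = (\<Sum>i\<in>UNIV. \<Sum>k<N. digit p (g i) k - digit p (f' i) k)"

lemma digit_excess_plain_move:
  assumes p: "p > 0" and i: "digit p (f i) k < digit p (f' i) k" and j: "digit p (f' j) k < digit p (f j) k"
    and "k < N"
  shows "digit_excess p N f' (move f i j (p ^ k)) < digit_excess p N f' f"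
proof -
  define g where "g = move f i j (p ^ k)"
  have ij: "i \<noteq> j"
    using i j by auto
  have j0: "digit p (f j) k \<noteq> 0" and i1: "digit p (f i) k + 1 < p"
    using i j digit_less[OF p, of "f' i" k] by auto
  have dg: "digit p (g r) m = digit p (f r) m + (if r = i \<and> m = k then 1 else 0) - (if r = j \<and> m = k then 1 else 0)" for r m
    unfolding g_def by (rule digit_plain_move[OF p ij j0 i1])
  have le: "digit p (g r) m - digit p (f' r) m \<le> digit p (f r) m - digit p (f' r) m" for r m
    using dg[of r m] i ij by auto
  show ?thesis
    unfolding g_def[symmetric] digit_excess_def
  proof (rule sum_strict_mono_ex1)
    show "\<forall>r\<in>UNIV. (\<Sum>m<N. digit p (g r) m - digit p (f' r) m) \<le> (\<Sum>m<N. digit p (f r) m - digit p (f' r) m)"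
      by (blast intro: sum_mono le)
    show "\<exists>r\<in>UNIV. (\<Sum>m<N. digit p (g r) m - digit p (f' r) m) < (\<Sum>m<N. digit p (f r) m - digit p (f' r) m)"
      using dg[of j k] ij j \<open>k < N\<close> by (intro bexI[of _ j] sum_strict_mono_ex1 bexI[of _ k]) (auto intro: le)
  qed simp
qed

lemma digit_moves_if_column_sums_eq:
  fixes f f' :: "'n::finite \<Rightarrow> nat"
  assumes p: "p > 1" and cs: "\<And>k. column_sum p f k = column_sum p f' k"
  shows "(digit_move p)\<^sup>*\<^sup>* f f'"
  using cs
proof (induction "digit_excess p (sum f' UNIV) f' f" arbitrary: f rule: less_induct)
  case less
  have p0: "p > 0"
    using p by simp
  show ?case
  proof (cases "f = f'")
    case False
    then obtain i j k where i: "digit p (f i) k < digit p (f' i) k" and j: "digit p (f' j) k < digit p (f j) k"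
      using exists_digit_deficit_and_surplus[OF p _ less.prems] by blast
    have ij: "i \<noteq> j" and j0: "digit p (f j) k \<noteq> 0" and i1: "digit p (f i) k + 1 < p"
      using i j digit_less[OF p0, of "f' i" k] by auto
    have "k < sum f' UNIV"
      using i digit_eq_0_beyond_sum[OF p, of f' k i] by (auto simp: not_less[symmetric])
    define g where "g = move f i j (p ^ k)"
    have "digit_excess p (sum f' UNIV) f' g < digit_excess p (sum f' UNIV) f' f"
      unfolding g_def using digit_excess_plain_move[OF p0 i j \<open>k < sum f' UNIV\<close>] .
    moreover have "column_sum p g m = column_sum p f' m" for m
      using column_sum_plain_move[OF p0 ij j0 i1] less.prems unfolding g_def by simp
    ultimately have "(digit_move p)\<^sup>*\<^sup>* g f'"
      using less.hyps by blast
    moreover have "digit_move p f g"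
      unfolding g_def using ij j0 by (rule digit_moveI)
    ultimately show ?thesis
      by (simp add: converse_rtranclp_into_rtranclp)
  qed simp
qed

lemma exists_other_nonzero_digit:
  fixes f :: "'n::finite \<Rightarrow> nat"
  assumes "digit p (f i) k < column_sum p f k"
  shows "\<exists>j. j \<noteq> i \<and> digit p (f j) k \<noteq> 0"
proof (rule ccontr)
  assume "\<not> ?thesis"
  then have "column_sum p f k = digit p (f i) k"
    unfolding column_sum_def by (subst sum.remove[of UNIV i]) auto
  with assms show False
    by simp
qed

lemma fill_digit:
  fixes f :: "'n::finite \<Rightarrow> nat"
  assumes p: "p > 1" and k: "p \<le> column_sum p f k"
  shows "\<exists>g. (digit_move p)\<^sup>*\<^sup>* f g \<and> (\<forall>m. column_sum p g m = column_sum p f m) \<and>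
    digit p (g i) k = p - 1 \<and> (\<forall>m. m \<noteq> k \<longrightarrow> digit p (g i) m = digit p (f i) m)"
  using k
proof (induction "p - 1 - digit p (f i) k" arbitrary: f rule: less_induct)
  case less
  have p0: "p > 0"
    using p by simp
  show ?case
  proof (cases "digit p (f i) k = p - 1")
    case False
    then have i: "digit p (f i) k + 1 < p"
      using digit_less[OF p0, of "f i" k] by simp
    then obtain j where ji: "j \<noteq> i" and j: "digit p (f j) k \<noteq> 0"
      using exists_other_nonzero_digit[of p f i k] less.prems by fastforce
    then have ij: "i \<noteq> j"
      by simp
    define g where "g = move f i j (p ^ k)"
    have dg: "digit p (g i) m = digit p (f i) m + (if m = k then 1 else 0)" for m
      unfolding g_def using digit_plain_move[OF p0 ij j i, of i m] ij by simp
    have cs: "column_sum p g m = column_sum p f m" for m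
      unfolding g_def by (rule column_sum_plain_move[OF p0 ij j i])
    have "p - 1 - digit p (g i) k < p - 1 - digit p (f i) k"
      using dg[of k] i by simp
    moreover have "p \<le> column_sum p g k"
      using less.prems cs by simp
    ultimately obtain h where h: "(digit_move p)\<^sup>*\<^sup>* g h" "\<forall>m. column_sum p h m = column_sum p g m"
      "digit p (h i) k = p - 1" "\<forall>m. m \<noteq> k \<longrightarrow> digit p (h i) m = digit p (g i) m"
      using less.hyps by blast
    have "digit_move p f g"
      unfolding g_def using ij j by (rule digit_moveI)
    then have "(digit_move p)\<^sup>*\<^sup>* f h"
      using h(1) by (rule converse_rtranclp_into_rtranclp)
    then show ?thesis
      using h(2-4) cs dg by (intro exI[of _ h]) auto
  qed blast
qed

lemma exists_digit_below_max:
  fixes f :: "'n::finite \<Rightarrow> nat"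
  assumes p: "p > 0" and "column_sum p f k < card (UNIV :: 'n set) * (p - 1)"
  shows "\<exists>i. digit p (f i) k + 1 < p"
proof (rule ccontr)
  assume "\<not> ?thesis"
  then have full: "\<not> digit p (f i) k + 1 < p" for i
    by blast
  have "digit p (f i) k = p - 1" for i
    using full[of i] digit_less[OF p, of "f i" k] by linarith
  then have "column_sum p f k = card (UNIV :: 'n set) * (p - 1)"
    by (simp add: column_sum_def)
  with assms(2) show False
    by simp
qed

(* Raise the k-th digit of an exponent with non-maximal (k+1)-th digit to p - 1; one more
   move then carries into digit k + 1, which lowers low_sum at k + 1 only. *)
lemma carry_digit_moves:
  fixes f :: "'n::finite \<Rightarrow> nat"
  assumes p: "p > 1" and k: "p \<le> column_sum p f k"
    and Suc_k: "column_sum p f (Suc k) < card (UNIV :: 'n set) * (p - 1)"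
  shows "\<exists>g. (digit_move p)\<^sup>*\<^sup>* f g \<and> (\<forall>l. low_sum p g l + (if l = Suc k then p ^ Suc k else 0) = low_sum p f l)"
proof -
  have p0: "p > 0"
    using p by simp
  obtain i where i_Suc: "digit p (f i) (Suc k) + 1 < p"
    using exists_digit_below_max[OF p0 Suc_k] by blast
  obtain g0 where g0: "(digit_move p)\<^sup>*\<^sup>* f g0" and cs: "\<forall>m. column_sum p g0 m = column_sum p f m"
    and i: "digit p (g0 i) k = p - 1" and i_other: "\<forall>m. m \<noteq> k \<longrightarrow> digit p (g0 i) m = digit p (f i) m"
    using fill_digit[OF p k, of i] by blast
  obtain j where ji: "j \<noteq> i" and j: "digit p (g0 j) k \<noteq> 0"
    using exists_other_nonzero_digit[of p g0 i k] cs i k p by fastforce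
  then have ij: "i \<noteq> j"
    by simp
  define g where "g = move g0 i j (p ^ k)"
  have "digit_move p g0 g"
    unfolding g_def using ij j by (rule digit_moveI)
  with g0 have "(digit_move p)\<^sup>*\<^sup>* f g"
    by simp
  moreover have "low_sum p g l + (if l = Suc k then p ^ Suc k else 0) = low_sum p f l" for l
  proof -
    have "low_sum p g0 l = low_sum p f l"
      using cs low_sums_eq_iff_column_sums_eq[OF p0, of g0 f] by blast
    then show ?thesis
      unfolding g_def using low_sum_carry_move[OF p0 ij j i] i_Suc i_other by simp
  qed
  ultimately show ?thesis
    by blast
qed

(* Above a column with a carry, full columns (all digits p - 1) keep the low sums apart;
   the walk ends below the total degree. *)
lemma exists_carry_position:
  fixes f f' :: "'n::finite \<Rightarrow> nat"
  assumes p: "p > 1" and sum_eq: "sum f UNIV = sum f' UNIV"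
  shows "low_sum p f' (Suc k) < low_sum p f (Suc k) \<Longrightarrow> p \<le> column_sum p f k \<Longrightarrow>
    \<exists>k'. low_sum p f' (Suc k') < low_sum p f (Suc k') \<and> p \<le> column_sum p f k' \<and>
      column_sum p f (Suc k') < card (UNIV :: 'n set) * (p - 1)"
proof (induction "sum f UNIV - k" arbitrary: k rule: less_induct)
  case less
  have p0: "p > 0"
    using p by simp
  show ?case
  proof (cases "column_sum p f (Suc k) < card (UNIV :: 'n set) * (p - 1)")
    case False
    then have full: "column_sum p f (Suc k) = card (UNIV :: 'n set) * (p - 1)"
      using column_sum_le[OF p0, of f "Suc k"] by simp
    have "p \<le> column_sum p f (Suc k)"
      using full column_sum_le[OF p0, of f k] less.prems(2) by simp
    moreover have "low_sum p f' (Suc (Suc k)) < low_sum p f (Suc (Suc k))"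
      using full column_sum_le[OF p0, of f' "Suc k"] less.prems(1)
        low_sum_Suc[OF p0, of f' "Suc k"] low_sum_Suc[OF p0, of f "Suc k"]
      by (simp add: add_less_le_mono)
    moreover have "sum f UNIV - Suc k < sum f UNIV - k"
      using low_sum_less_imp_less_sum[OF p sum_eq less.prems(1)] by simp
    ultimately show ?thesis
      using less.hyps by blast
  qed (use less.prems in blast)
qed

lemma first_low_sum_difference:
  fixes f f' :: "'n::finite \<Rightarrow> nat"
  assumes p: "p > 1" and sum_eq: "sum f UNIV = sum f' UNIV"
    and le: "\<And>l. low_sum p f' l \<le> low_sum p f l" and less: "low_sum p f' l < low_sum p f l"
  shows "\<exists>k. low_sum p f' (Suc k) < low_sum p f (Suc k) \<and> p \<le> column_sum p f k"
proof -
  have p0: "p > 0"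
    using p by simp
  define l0 where "l0 = (LEAST l. low_sum p f' l < low_sum p f l)"
  have l0: "low_sum p f' l0 < low_sum p f l0"
    unfolding l0_def using less by (rule LeastI)
  then obtain k where k: "l0 = Suc k"
    by (cases l0) (simp_all add: low_sum_def)
  then have "\<not> low_sum p f' k < low_sum p f k"
    unfolding l0_def by (metis lessI not_less_Least)
  then have "low_sum p f' k = low_sum p f k"
    using le[of k] by simp
  moreover have "low_sum p f' (Suc k) + p ^ Suc k \<le> low_sum p f (Suc k)"
    using low_sum_gap[OF sum_eq l0[unfolded k]] by simp
  ultimately have "(column_sum p f' k + p) * p ^ k \<le> column_sum p f k * p ^ k"
    using low_sum_Suc[OF p0, of f' k] low_sum_Suc[OF p0, of f k] by (simp add: algebra_simps)
  then have "p \<le> column_sum p f k"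
    using p0 by simp
  then show ?thesis
    using l0 k by blast
qed

lemma low_sum_decreasing_digit_moves:
  fixes f f' :: "'n::finite \<Rightarrow> nat"
  assumes p: "p > 1" and sum_eq: "sum f UNIV = sum f' UNIV" and le: "\<And>l. low_sum p f' l \<le> low_sum p f l"
    and less: "low_sum p f' l < low_sum p f l"
  shows "\<exists>g. (digit_move p)\<^sup>*\<^sup>* f g \<and> (\<forall>l. low_sum p f' l \<le> low_sum p g l) \<and>
    (\<Sum>l<sum f UNIV. low_sum p g l) < (\<Sum>l<sum f UNIV. low_sum p f l)"
proof -
  have p0: "p > 0"
    using p by simp
  obtain k where k: "low_sum p f' (Suc k) < low_sum p f (Suc k)" "p \<le> column_sum p f k"
      "column_sum p f (Suc k) < card (UNIV :: 'n set) * (p - 1)"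
    using first_low_sum_difference[OF p sum_eq le less] exists_carry_position[OF p sum_eq] by blast
  obtain g where fg: "(digit_move p)\<^sup>*\<^sup>* f g"
    and g: "\<And>l. low_sum p g l + (if l = Suc k then p ^ Suc k else 0) = low_sum p f l"
    using carry_digit_moves[OF p k(2,3)] by blast
  have "Suc k < sum f UNIV"
    by (rule low_sum_less_imp_less_sum[OF p sum_eq k(1)])
  moreover have "low_sum p g l \<le> low_sum p f l" for l
    using g[of l] by (metis le_add1)
  moreover have "low_sum p g (Suc k) < low_sum p f (Suc k)"
    using g[of "Suc k"] p0 by (metis (full_types) less_add_same_cancel1 zero_less_power)
  ultimately have "(\<Sum>l<sum f UNIV. low_sum p g l) < (\<Sum>l<sum f UNIV. low_sum p f l)"
    by (intro sum_strict_mono_ex1 bexI[of _ "Suc k"]) auto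
  moreover have "low_sum p f' l \<le> low_sum p g l" for l
    using g[of l] le[of l] low_sum_gap[OF sum_eq k(1)] by (cases "l = Suc k") auto
  ultimately show ?thesis
    using fg by blast
qed

lemma digit_moves_if_low_sums_le:
  fixes f f' :: "'n::finite \<Rightarrow> nat"
  assumes p: "p > 1" and "sum f UNIV = sum f' UNIV" and "\<And>l. low_sum p f' l \<le> low_sum p f l"
  shows "(digit_move p)\<^sup>*\<^sup>* f f'"
  using assms(2,3)
proof (induction "\<Sum>l<sum f' UNIV. low_sum p f l" arbitrary: f rule: less_induct)
  case less
  show ?case
  proof (cases "\<exists>l. low_sum p f' l < low_sum p f l")
    case False
    then have "\<forall>l. low_sum p f l = low_sum p f' l"
      using less.prems(2) by (meson antisym not_less)
    then have "\<forall>k. column_sum p f k = column_sum p f' k"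
      using low_sums_eq_iff_column_sums_eq[of p f f'] p by simp
    then show ?thesis
      using digit_moves_if_column_sums_eq[OF p] by blast
  next
    case True
    then obtain g where fg: "(digit_move p)\<^sup>*\<^sup>* f g" and le: "\<forall>l. low_sum p f' l \<le> low_sum p g l"
      and "(\<Sum>l<sum f UNIV. low_sum p g l) < (\<Sum>l<sum f UNIV. low_sum p f l)"
      using low_sum_decreasing_digit_moves[OF p less.prems] by blast
    moreover have "sum g UNIV = sum f' UNIV"
      using sum_digit_moves[OF fg] less.prems(1) by simp
    ultimately have "(digit_move p)\<^sup>*\<^sup>* g f'"
      using less.hyps less.prems(1) by simp
    with fg show ?thesis
      by (rule rtranclp_trans)
  qed
qed

section \<open>Carry patterns through low sums\<close>

lemma lookup_le_mdeg: "Poly_Mapping.lookup b i \<le> mdeg b"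
  unfolding mdeg_def by (rule member_le_sum) simp_all

lemma low_sum_mdeg_decomp:
  "low_sum p (Poly_Mapping.lookup b) l =
     mdeg b mod p ^ l + p ^ l * (low_sum p (Poly_Mapping.lookup b) l div p ^ l)"
proof -
  have "low_sum p (Poly_Mapping.lookup b) l mod p ^ l = mdeg b mod p ^ l"
    unfolding low_sum_def mdeg_def by (rule mod_sum_eq)
  then show ?thesis
    by (metis mod_mult_div_eq)
qed

lemma carry_eq_low_sum_div:
  assumes p: "p > 1"
  shows "carry p b l = (if 1 \<le> mdeg b \<and> 1 \<le> l \<and> l \<le> topdeg p (mdeg b)
    then low_sum p (Poly_Mapping.lookup b) l div p ^ l else 0)"
proof -
  have p0: "p > 0"
    using p by simp
  have "(\<Sum>i\<in>UNIV. \<Sum>j<l. digit p (Poly_Mapping.lookup b i) j * p ^ j) = low_sum p (Poly_Mapping.lookup b) l"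
    unfolding low_sum_def by (simp add: mod_power_eq_digit_sum[OF p0])
  moreover have "(\<Sum>j<l. digit p (mdeg b) j * p ^ j) = mdeg b mod p ^ l"
    by (simp add: mod_power_eq_digit_sum[OF p0])
  moreover have "(low_sum p (Poly_Mapping.lookup b) l - mdeg b mod p ^ l) div p ^ l =
      low_sum p (Poly_Mapping.lookup b) l div p ^ l"
  proof -
    have "low_sum p (Poly_Mapping.lookup b) l - mdeg b mod p ^ l =
        p ^ l * (low_sum p (Poly_Mapping.lookup b) l div p ^ l)"
      using low_sum_mdeg_decomp[of p b l] by linarith
    then show ?thesis
      using p0 by simp
  qed
  ultimately show ?thesis
    unfolding carry_def Let_def by simp
qed

lemma low_sum_outside_carry_range:
  assumes p: "p > 1" and out: "\<not> (1 \<le> mdeg b \<and> 1 \<le> l \<and> l \<le> topdeg p (mdeg b))"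
  shows "low_sum p (Poly_Mapping.lookup b) l = (if l = 0 then 0 else mdeg b)"
proof (cases "l = 0 \<or> mdeg b = 0")
  case True
  then show ?thesis
    using lookup_le_mdeg[of b] by (auto simp: low_sum_def)
next
  case False
  then have l: "Suc (topdeg p (mdeg b)) \<le> l"
    using out by simp
  have "Poly_Mapping.lookup b i < p ^ l" for i
  proof -
    have "Poly_Mapping.lookup b i < p ^ Suc (topdeg p (mdeg b))"
      using lookup_le_mdeg[of b i] less_power_Suc_topdeg[OF p, of "mdeg b"] by linarith
    also have "\<dots> \<le> p ^ l"
      by (rule power_increasing) (use l p in simp_all)
    finally show ?thesis .
  qed
  then show ?thesis
    using False by (simp add: low_sum_def mdeg_def)
qed

lemma carry_le_iff_low_sum_le:
  fixes b b' :: "'n::finite \<Rightarrow>\<^sub>0 nat"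
  assumes p: "p > 1" and deg: "mdeg b' = mdeg b"
  shows "carry p b' \<le> carry p b \<longleftrightarrow>
    (\<forall>l. low_sum p (Poly_Mapping.lookup b') l \<le> low_sum p (Poly_Mapping.lookup b) l)"
proof
  assume le: "carry p b' \<le> carry p b"
  show "\<forall>l. low_sum p (Poly_Mapping.lookup b') l \<le> low_sum p (Poly_Mapping.lookup b) l"
  proof
    fix l
    show "low_sum p (Poly_Mapping.lookup b') l \<le> low_sum p (Poly_Mapping.lookup b) l"
    proof (cases "1 \<le> mdeg b \<and> 1 \<le> l \<and> l \<le> topdeg p (mdeg b)")
      case True
      then have "low_sum p (Poly_Mapping.lookup b') l div p ^ l \<le> low_sum p (Poly_Mapping.lookup b) l div p ^ l"
        using le_funD[OF le, of l] deg by (simp add: carry_eq_low_sum_div[OF p])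
      then have "p ^ l * (low_sum p (Poly_Mapping.lookup b') l div p ^ l) \<le>
          p ^ l * (low_sum p (Poly_Mapping.lookup b) l div p ^ l)"
        by (rule mult_le_mono2)
      then show ?thesis
        using low_sum_mdeg_decomp[of p b' l, unfolded deg] low_sum_mdeg_decomp[of p b l] by linarith
    next
      case False
      then show ?thesis
        using low_sum_outside_carry_range[OF p, of b l] low_sum_outside_carry_range[OF p, of b' l] deg by simp
    qed
  qed
next
  assume "\<forall>l. low_sum p (Poly_Mapping.lookup b') l \<le> low_sum p (Poly_Mapping.lookup b) l"
  then show "carry p b' \<le> carry p b"
    using deg by (auto simp: le_fun_def carry_eq_low_sum_div[OF p] div_le_mono)
qed

section \<open>Linear substitutions and ideals\<close>

lemma poly_mapping_sum_single:
  "f = (\<Sum>m\<in>Poly_Mapping.keys f. Poly_Mapping.single m (Poly_Mapping.lookup f m))"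
  by (rule poly_mapping_eqI) (simp add: lookup_sum lookup_single when_def in_keys_iff)

lemma cst_0 [simp]: "cst 0 = 0"
  by (simp add: cst_def)

lemma cst_1 [simp]: "cst 1 = 1"
  by (simp add: cst_def)

lemma cst_add: "cst (a + b) = cst a + cst b"
  by (simp add: cst_def single_add)

lemma cst_diff: "cst (a - b) = cst a - cst b"
  by (simp add: cst_def single_diff)

lemma cst_mult: "cst (a * b) = cst a * cst b"
  by (simp add: cst_def mult_single)

lemma cst_power: "cst (c ^ n) = cst c ^ n"
  by (induction n) (simp_all add: cst_mult)

lemma cst_prod: "cst (\<Prod>k\<in>A. F k) = (\<Prod>k\<in>A. cst (F k))"
  by (induction A rule: infinite_finite_induct) (simp_all add: cst_mult)

lemma cst_of_nat: "cst (of_nat n) = of_nat n"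
  by (simp add: cst_def)

lemma cst_mult_single: "cst c * Poly_Mapping.single m a = Poly_Mapping.single m (c * a)"
  by (simp add: cst_def mult_single)

lemma single_eq_cst_mult_monomial: "Poly_Mapping.single m c = cst c * monomial_x m"
  by (simp add: monomial_x_def cst_mult_single)

lemma monomial_x_0 [simp]: "monomial_x 0 = 1"
  by (simp add: monomial_x_def)

lemma monomial_x_add: "monomial_x (a + b) = monomial_x a * monomial_x b"
  by (simp add: monomial_x_def mult_single)

lemma prod_monomial_x: "(\<Prod>k\<in>A. monomial_x (F k)) = monomial_x (\<Sum>k\<in>A. F k)"
  by (induction A rule: infinite_finite_induct) (simp_all add: monomial_x_add)

lemma var_power: "var k ^ e = monomial_x (Poly_Mapping.single k e)"
  by (induction e) (simp_all add: var_def monomial_x_add[symmetric] single_add[symmetric] add.commute)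

lemma prod_var_power: "(\<Prod>k\<in>UNIV. var k ^ Poly_Mapping.lookup m k) = monomial_x (m :: 'n::finite \<Rightarrow>\<^sub>0 nat)"
proof -
  have "(\<Sum>k\<in>UNIV. Poly_Mapping.single k (Poly_Mapping.lookup m k)) = m"
    by (rule poly_mapping_eqI) (simp add: lookup_sum lookup_single when_def)
  then show ?thesis
    by (simp add: var_power prod_monomial_x)
qed

definition eval_monom :: "('n::finite \<Rightarrow> ('n, 'k::field) mpoly) \<Rightarrow> ('n \<Rightarrow>\<^sub>0 nat) \<Rightarrow> ('n, 'k) mpoly" where
  "eval_monom L m = (\<Prod>i\<in>UNIV. L i ^ Poly_Mapping.lookup m i)"

definition eval_mpoly :: "('n::finite \<Rightarrow> ('n, 'k::field) mpoly) \<Rightarrow> ('n, 'k) mpoly \<Rightarrow> ('n, 'k) mpoly" where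
  "eval_mpoly L f = (\<Sum>m\<in>Poly_Mapping.keys f. cst (Poly_Mapping.lookup f m) * eval_monom L m)"

definition linear_form :: "('n::finite \<Rightarrow> 'n \<Rightarrow> 'k::field) \<Rightarrow> 'n \<Rightarrow> ('n, 'k) mpoly" where
  "linear_form g i = (\<Sum>k\<in>UNIV. cst (g k i) * var k)"

lemma act_eq_eval_mpoly: "act g f = eval_mpoly (linear_form g) f"
  unfolding act_def eval_mpoly_def eval_monom_def linear_form_def ..

lemma eval_mpoly_superset:
  assumes "finite A" "Poly_Mapping.keys f \<subseteq> A"
  shows "eval_mpoly L f = (\<Sum>m\<in>A. cst (Poly_Mapping.lookup f m) * eval_monom L m)"
  unfolding eval_mpoly_def using assms by (intro sum.mono_neutral_left) (auto simp: in_keys_iff)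

lemma eval_mpoly_add: "eval_mpoly L (f + h) = eval_mpoly L f + eval_mpoly L h"
proof -
  let ?A = "Poly_Mapping.keys f \<union> Poly_Mapping.keys h"
  have "Poly_Mapping.keys (f + h) \<subseteq> ?A"
    by (rule keys_add)
  then show ?thesis
    using eval_mpoly_superset[of ?A f L] eval_mpoly_superset[of ?A h L] eval_mpoly_superset[of ?A "f + h" L]
    by (simp add: lookup_add cst_add distrib_right sum.distrib)
qed

lemma eval_mpoly_0 [simp]: "eval_mpoly L 0 = 0"
  by (simp add: eval_mpoly_def)

lemma eval_mpoly_single: "eval_mpoly L (Poly_Mapping.single m c) = cst c * eval_monom L m"
  by (cases "c = 0") (simp_all add: eval_mpoly_def)

lemma eval_mpoly_sum: "eval_mpoly L (sum F A) = (\<Sum>x\<in>A. eval_mpoly L (F x))"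
  by (induction A rule: infinite_finite_induct) (simp_all add: eval_mpoly_add)

lemma eval_monom_add: "eval_monom L (a + b) = eval_monom L a * eval_monom L b"
  by (simp add: eval_monom_def lookup_add power_add prod.distrib)

lemma eval_mpoly_mult: "eval_mpoly L (f * h) = eval_mpoly L f * eval_mpoly L h"
proof -
  have "f * h = (\<Sum>a\<in>Poly_Mapping.keys f. Poly_Mapping.single a (Poly_Mapping.lookup f a)) *
      (\<Sum>b\<in>Poly_Mapping.keys h. Poly_Mapping.single b (Poly_Mapping.lookup h b))"
    by (simp flip: poly_mapping_sum_single)
  also have "\<dots> = (\<Sum>a\<in>Poly_Mapping.keys f. \<Sum>b\<in>Poly_Mapping.keys h.
      Poly_Mapping.single (a + b) (Poly_Mapping.lookup f a * Poly_Mapping.lookup h b))"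
    by (simp add: sum_product mult_single)
  finally have "eval_mpoly L (f * h) = (\<Sum>a\<in>Poly_Mapping.keys f. \<Sum>b\<in>Poly_Mapping.keys h.
      (cst (Poly_Mapping.lookup f a) * eval_monom L a) * (cst (Poly_Mapping.lookup h b) * eval_monom L b))"
    by (simp add: eval_mpoly_sum eval_mpoly_single eval_monom_add cst_mult algebra_simps)
  also have "\<dots> = eval_mpoly L f * eval_mpoly L h"
    by (simp add: eval_mpoly_def sum_product)
  finally show ?thesis .
qed

lemma act_add: "act g (f + h) = act g f + act g h"
  by (simp add: act_eq_eval_mpoly eval_mpoly_add)

lemma act_mult: "act g (f * h) = act g f * act g h"
  by (simp add: act_eq_eval_mpoly eval_mpoly_mult)

lemma act_0: "act g 0 = 0"
  by (simp add: act_def)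

lemma act_monomial_x: "act g (monomial_x b) = eval_monom (linear_form g) b"
  by (simp add: act_eq_eval_mpoly monomial_x_def eval_mpoly_single cst_def)

lemma is_ideal_ideal_gen: "is_ideal (ideal_gen G)"
  unfolding is_ideal_def ideal_gen_def by auto

lemma ideal_gen_subset: "G \<subseteq> ideal_gen G"
  unfolding ideal_gen_def by auto

lemma ideal_gen_least: "is_ideal J \<Longrightarrow> G \<subseteq> J \<Longrightarrow> ideal_gen G \<subseteq> J"
  unfolding ideal_gen_def by auto

lemma ideal_add: "is_ideal J \<Longrightarrow> a \<in> J \<Longrightarrow> b \<in> J \<Longrightarrow> a + b \<in> J"
  by (simp add: is_ideal_def)

lemma ideal_mult: "is_ideal J \<Longrightarrow> a \<in> J \<Longrightarrow> r * a \<in> J"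
  by (simp add: is_ideal_def)

lemma ideal_diff: "is_ideal J \<Longrightarrow> a \<in> J \<Longrightarrow> b \<in> J \<Longrightarrow> a - b \<in> J"
  using ideal_add[of J a "(- 1) * b"] ideal_mult[of J b "- 1"] by simp

lemma ideal_sum: "is_ideal J \<Longrightarrow> (\<And>x. x \<in> A \<Longrightarrow> F x \<in> J) \<Longrightarrow> sum F A \<in> J"
  by (induction A rule: infinite_finite_induct) (auto simp: is_ideal_def)

lemma mem_ideal_if_monomials_mem:
  assumes "is_ideal J" "\<And>m. m \<in> Poly_Mapping.keys f \<Longrightarrow> monomial_x m \<in> J"
  shows "f \<in> J"
proof -
  have "(\<Sum>m\<in>Poly_Mapping.keys f. Poly_Mapping.single m (Poly_Mapping.lookup f m)) \<in> J"
    using assms by (intro ideal_sum) (auto simp: single_eq_cst_mult_monomial ideal_mult)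
  then show ?thesis
    by (simp flip: poly_mapping_sum_single)
qed

lemma act_image_ideal_gen_subset:
  assumes "is_ideal J" "act g ` G \<subseteq> J"
  shows "act g ` ideal_gen G \<subseteq> J"
proof -
  have "is_ideal {f. act g f \<in> J}"
    using assms(1) unfolding is_ideal_def by (auto simp: act_add act_mult act_0)
  then have "ideal_gen G \<subseteq> {f. act g f \<in> J}"
    using assms(2) by (intro ideal_gen_least) auto
  then show ?thesis
    by blast
qed

section \<open>Carry ideals are invariant\<close>

lemma CHAR_mpoly: "CHAR(('n, 'k::field) mpoly) = CHAR('k)"
proof (rule CHAR_eqI)
  show "of_nat CHAR('k) = (0 :: ('n, 'k) mpoly)"
    by (simp flip: single_of_nat)
next
  fix x assume x: "of_nat x = (0 :: ('n, 'k) mpoly)"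
  have "(of_nat x :: 'k) = Poly_Mapping.lookup (of_nat x :: ('n, 'k) mpoly) 0"
    by (simp add: lookup_of_nat)
  also have "\<dots> = 0"
    using x by simp
  finally show "CHAR('k) dvd x"
    by (simp add: of_nat_eq_0_iff_char_dvd)
qed

lemma keys_power_subset:
  fixes h :: "('n, 'k::field) mpoly"
  assumes "0 \<in> P" "\<And>a b. a \<in> P \<Longrightarrow> b \<in> P \<Longrightarrow> a + b \<in> P" "Poly_Mapping.keys h \<subseteq> P"
  shows "Poly_Mapping.keys (h ^ n) \<subseteq> P"
proof (induction n)
  case (Suc n)
  have "Poly_Mapping.keys (h ^ Suc n) \<subseteq>
      {a + b |a b. a \<in> Poly_Mapping.keys h \<and> b \<in> Poly_Mapping.keys (h ^ n)}"
    by (simp add: keys_mult)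
  then show ?case
    using Suc assms by blast
qed (use assms in simp)

lemma single_power:
  "Poly_Mapping.single a c ^ n = Poly_Mapping.single (\<Sum>_<n. a) (c ^ n)"
  by (induction n) (simp_all add: mult_single add.commute)

lemma keys_frobenius_power:
  fixes h :: "('n, 'k::field) mpoly"
  assumes "prime p" and "CHAR('k) = p"
  shows "Poly_Mapping.keys (h ^ (p ^ l)) \<subseteq> {b. \<forall>k. p ^ l dvd Poly_Mapping.lookup b k}"
proof -
  have char: "prime CHAR(('n, 'k) mpoly)"
    using assms by (simp add: CHAR_mpoly)
  have "h ^ (p ^ l) = (\<Sum>a\<in>Poly_Mapping.keys h. Poly_Mapping.single a (Poly_Mapping.lookup h a)) ^ (p ^ l)"
    by (simp flip: poly_mapping_sum_single)
  also have "\<dots> = (\<Sum>a\<in>Poly_Mapping.keys h. Poly_Mapping.single a (Poly_Mapping.lookup h a) ^ (p ^ l))"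
    by (rule freshmans_dream_sum'[OF char]) (simp add: CHAR_mpoly assms)
  finally have "Poly_Mapping.keys (h ^ (p ^ l)) \<subseteq>
      (\<Union>a\<in>Poly_Mapping.keys h. Poly_Mapping.keys (Poly_Mapping.single a (Poly_Mapping.lookup h a) ^ (p ^ l)))"
    by (simp only: keys_sum)
  also have "\<dots> \<subseteq> (\<Union>a\<in>Poly_Mapping.keys h. {\<Sum>_<p ^ l. a})"
    by (auto simp: single_power split: if_splits)
  finally show ?thesis
    by (auto simp: lookup_sum)
qed

lemma mdeg_add: "mdeg (a + b) = mdeg a + mdeg b"
  by (simp add: mdeg_def lookup_add sum.distrib)

lemma keys_power_homogeneous:
  fixes h :: "('n::finite, 'k::field) mpoly"
  assumes "Poly_Mapping.keys h \<subseteq> {b. mdeg b = d}"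
  shows "Poly_Mapping.keys (h ^ n) \<subseteq> {b. mdeg b = n * d}"
proof (induction n)
  case 0
  then show ?case
    by (simp add: mdeg_def)
next
  case (Suc n)
  show ?case
  proof
    fix c assume "c \<in> Poly_Mapping.keys (h ^ Suc n)"
    then obtain a b where "c = a + b" "a \<in> Poly_Mapping.keys h" "b \<in> Poly_Mapping.keys (h ^ n)"
      using keys_mult[of h "h ^ n"] by auto
    moreover from this(2,3) have "mdeg a = d" "mdeg b = n * d"
      using Suc assms by blast+
    ultimately show "c \<in> {b. mdeg b = Suc n * d}"
      by (simp add: mdeg_add)
  qed
qed

lemma low_sum_add_le: "low_sum p (\<lambda>i. f i + g i) l \<le> low_sum p f l + low_sum p g l"
  unfolding low_sum_def sum.distrib[symmetric]
  by (intro sum_mono) (metis mod_add_eq mod_less_eq_dividend)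

lemma low_sum_le_sum: "low_sum p f l \<le> sum f UNIV"
  unfolding low_sum_def by (intro sum_mono) simp

lemma low_sum_add_multiple:
  assumes "\<And>i. p ^ l dvd g i"
  shows "low_sum p (\<lambda>i. f i + g i) l = low_sum p f l"
  unfolding low_sum_def
proof (rule sum.cong)
  fix i
  show "(f i + g i) mod p ^ l = f i mod p ^ l"
    using assms[of i] by (metis add.right_neutral dvd_imp_mod_0 mod_add_right_eq)
qed simp

lemma keys_power_linear:
  fixes h :: "('n::finite, 'k::field) mpoly"
  assumes pr: "prime p" and char: "CHAR('k) = p" and lin: "Poly_Mapping.keys h \<subseteq> {b. mdeg b = 1}"
    and a: "a \<in> Poly_Mapping.keys (h ^ m)"
  shows "mdeg a = m" and "low_sum p (Poly_Mapping.lookup a) l \<le> m mod p ^ l"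
proof -
  show "mdeg a = m"
    using keys_power_homogeneous[OF lin, of m] a by auto
  define r q where "r = m mod p ^ l" and "q = m div p ^ l"
  have "m = r + p ^ l * q"
    by (simp add: r_def q_def)
  then have "h ^ m = h ^ r * (h ^ (p ^ l)) ^ q"
    by (simp only: power_add power_mult)
  then obtain x y where xy: "a = x + y" "x \<in> Poly_Mapping.keys (h ^ r)" "y \<in> Poly_Mapping.keys ((h ^ (p ^ l)) ^ q)"
    using a keys_mult[of "h ^ r" "(h ^ (p ^ l)) ^ q"] by auto
  have "Poly_Mapping.keys ((h ^ (p ^ l)) ^ q) \<subseteq> {b. \<forall>k. p ^ l dvd Poly_Mapping.lookup b k}"
    by (rule keys_power_subset) (auto simp: lookup_add keys_frobenius_power[OF pr char])
  then have y: "p ^ l dvd Poly_Mapping.lookup y k" for k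
    using xy(3) by blast
  then have "low_sum p (Poly_Mapping.lookup a) l = low_sum p (Poly_Mapping.lookup x) l"
    using low_sum_add_multiple[OF y] xy(1) by (simp add: plus_poly_mapping.rep_eq)
  also have "\<dots> \<le> mdeg x"
    unfolding mdeg_def by (rule low_sum_le_sum)
  also have "mdeg x = r"
    using keys_power_homogeneous[OF lin, of r] xy(2) by auto
  finally show "low_sum p (Poly_Mapping.lookup a) l \<le> m mod p ^ l"
    unfolding r_def .
qed

lemma keys_prod_power_linear:
  fixes L :: "'n::finite \<Rightarrow> ('n, 'k::field) mpoly"
  assumes pr: "prime p" and char: "CHAR('k) = p" and lin: "\<And>i. Poly_Mapping.keys (L i) \<subseteq> {b. mdeg b = 1}"
  shows "a \<in> Poly_Mapping.keys (\<Prod>i\<in>A. L i ^ e i) \<Longrightarrow>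
    mdeg a = (\<Sum>i\<in>A. e i) \<and> low_sum p (Poly_Mapping.lookup a) l \<le> (\<Sum>i\<in>A. e i mod p ^ l)"
proof (induction A arbitrary: a rule: infinite_finite_induct)
  case (insert i A)
  then obtain x y where xy: "a = x + y" "x \<in> Poly_Mapping.keys (L i ^ e i)" "y \<in> Poly_Mapping.keys (\<Prod>i\<in>A. L i ^ e i)"
    using keys_mult[of "L i ^ e i" "\<Prod>i\<in>A. L i ^ e i"] by auto
  have "low_sum p (Poly_Mapping.lookup a) l \<le> low_sum p (Poly_Mapping.lookup x) l + low_sum p (Poly_Mapping.lookup y) l"
    using low_sum_add_le[of p "Poly_Mapping.lookup x" "Poly_Mapping.lookup y" l] xy(1)
    by (simp add: plus_poly_mapping.rep_eq)
  moreover have "low_sum p (Poly_Mapping.lookup x) l \<le> e i mod p ^ l"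
    by (rule keys_power_linear(2)[OF pr char lin xy(2)])
  moreover have "mdeg x = e i"
    by (rule keys_power_linear(1)[OF pr char lin xy(2)])
  ultimately show ?case
    using insert.IH[OF xy(3)] insert.hyps xy(1) by (simp add: mdeg_add)
qed (simp_all add: low_sum_def mdeg_def)

lemma linear_form_keys: "Poly_Mapping.keys (linear_form g i) \<subseteq> {b. mdeg b = 1}"
proof -
  have "Poly_Mapping.keys (linear_form g i) \<subseteq> (\<Union>k. Poly_Mapping.keys (cst (g k i) * var k))"
    unfolding linear_form_def by (rule keys_sum)
  also have "\<dots> \<subseteq> {b. mdeg b = 1}"
    by (auto simp: var_def monomial_x_def cst_mult_single mdeg_def lookup_single when_def)
  finally show ?thesis .
qed

lemma keys_act_monomial_x:
  fixes g :: "'n::finite \<Rightarrow> 'n \<Rightarrow> 'k::field"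
  assumes "prime p" and "CHAR('k) = p" and "a \<in> Poly_Mapping.keys (act g (monomial_x b))"
  shows "mdeg a = mdeg b" and "low_sum p (Poly_Mapping.lookup a) l \<le> low_sum p (Poly_Mapping.lookup b) l"
  using keys_prod_power_linear[OF assms(1,2) linear_form_keys[of g], where A = UNIV and e = "Poly_Mapping.lookup b"]
    assms(3)
  by (simp_all add: act_monomial_x eval_monom_def mdeg_def low_sum_def)

lemma act_carry_ideal_subset:
  assumes pr: "prime p" and char: "CHAR('k) = p"
  shows "act g ` carry_ideal p d c \<subseteq> (carry_ideal p d c :: ('n::finite, 'k::field) mpoly set)"
  unfolding carry_ideal_def
proof (rule act_image_ideal_gen_subset[OF is_ideal_ideal_gen], rule image_subsetI)
  fix x :: "('n, 'k) mpoly"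
  assume "x \<in> {monomial_x b |b. mdeg b = d \<and> carry p b \<le> c}"
  then obtain b where x: "x = monomial_x b" and b: "mdeg b = d" "carry p b \<le> c"
    by blast
  show "act g x \<in> ideal_gen {monomial_x b |b. mdeg b = d \<and> carry p b \<le> c}"
    unfolding x
  proof (rule mem_ideal_if_monomials_mem[OF is_ideal_ideal_gen])
    fix a assume a: "a \<in> Poly_Mapping.keys (act g (monomial_x b :: ('n, 'k) mpoly))"
    have "carry p a \<le> carry p b"
      using keys_act_monomial_x[OF pr char a] prime_gt_1_nat[OF pr]
      by (simp add: carry_le_iff_low_sum_le)
    then show "monomial_x a \<in> ideal_gen {monomial_x b |b. mdeg b = d \<and> carry p b \<le> c}"
      using keys_act_monomial_x(1)[OF pr char a] b by (intro ideal_gen_subset[THEN subsetD]) auto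
  qed
qed

lemma GL_invariant_carry_sum_ideal:
  assumes "prime p" and "CHAR('k) = p"
  shows "GL_invariant (carry_sum_ideal p B :: ('n::finite, 'k::field) mpoly set)"
  unfolding GL_invariant_def carry_sum_ideal_def
proof (intro ballI act_image_ideal_gen_subset[OF is_ideal_ideal_gen])
  fix g :: "'n \<Rightarrow> 'n \<Rightarrow> 'k"
  have "act g ` carry_ideal p d c \<subseteq> ideal_gen (\<Union>(d, c)\<in>B. carry_ideal p d c)" if "(d, c) \<in> B" for d c
    using act_carry_ideal_subset[OF assms, of g d c] ideal_gen_subset that by fast
  then show "act g ` (\<Union>(d, c)\<in>B. carry_ideal p d c) \<subseteq> ideal_gen (\<Union>(d, c)\<in>B. carry_ideal p d c)"
    by blast
qed

section \<open>Invariant ideals are monomial\<close>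

definition diag_scale :: "'n \<Rightarrow> 'k::field \<Rightarrow> 'n \<Rightarrow> 'n \<Rightarrow> 'k" where
  "diag_scale i0 c a b = (if a = b then if a = i0 then c else 1 else 0)"

(* The matrix 1 + E_{ij}, acting by x_j \<mapsto> x_j + x_i. *)
definition elementary :: "'n \<Rightarrow> 'n \<Rightarrow> 'n \<Rightarrow> 'n \<Rightarrow> 'k::field" where
  "elementary i j a b = (if a = b then 1 else 0) + (if a = i \<and> b = j then 1 else 0)"

lemma diag_scale_GL:
  assumes "c \<noteq> 0"
  shows "diag_scale i0 c \<in> (GL :: ('n::finite \<Rightarrow> 'n \<Rightarrow> 'k::field) set)"
  unfolding GL_def
proof (intro CollectI exI[of _ "diag_scale i0 (inverse c)"] conjI allI)
  fix i j :: 'n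
  have "(\<Sum>l\<in>UNIV. diag_scale i0 c i l * diag_scale i0 (inverse c) l j) =
      (\<Sum>l\<in>UNIV. if l = i then diag_scale i0 c i i * diag_scale i0 (inverse c) i j else 0)"
    by (rule sum.cong) (auto simp: diag_scale_def)
  then show "(\<Sum>l\<in>UNIV. diag_scale i0 c i l * diag_scale i0 (inverse c) l j) = (if i = j then 1 else 0)"
    using assms by (simp add: diag_scale_def)
  have "(\<Sum>l\<in>UNIV. diag_scale i0 (inverse c) i l * diag_scale i0 c l j) =
      (\<Sum>l\<in>UNIV. if l = i then diag_scale i0 (inverse c) i i * diag_scale i0 c i j else 0)"
    by (rule sum.cong) (auto simp: diag_scale_def)
  then show "(\<Sum>l\<in>UNIV. diag_scale i0 (inverse c) i l * diag_scale i0 c l j) = (if i = j then 1 else 0)"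
    using assms by (simp add: diag_scale_def)
qed

lemma elementary_GL:
  assumes ij: "i \<noteq> j"
  shows "elementary i j \<in> (GL :: ('n::finite \<Rightarrow> 'n \<Rightarrow> 'k::field) set)"
  unfolding GL_def
proof (intro CollectI exI[of _ "\<lambda>a b. (if a = b then 1 else 0) - (if a = i \<and> b = j then 1 else 0)"] conjI allI)
  fix a b :: 'n
  let ?h = "\<lambda>a b. (if a = b then 1 else 0) - (if a = i \<and> b = j then (1::'k) else 0)"
  have "(\<Sum>l\<in>UNIV. elementary i j a l * ?h l b) =
      (\<Sum>l\<in>UNIV. (if l = a then ?h a b else 0) + (if l = j then (if a = i then ?h j b else 0) else 0))"
    by (rule sum.cong) (auto simp: elementary_def)
  also have "\<dots> = (if a = b then 1 else 0)"
    using ij by (simp add: sum.distrib)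
  finally show "(\<Sum>l\<in>UNIV. elementary i j a l * ?h l b) = (if a = b then 1 else 0)" .
  have "(\<Sum>l\<in>UNIV. ?h a l * elementary i j l b) =
      (\<Sum>l\<in>UNIV. (if l = a then elementary i j a b else 0) - (if l = j then (if a = i then elementary i j j b else 0) else 0))"
    by (rule sum.cong) (auto simp: elementary_def)
  also have "\<dots> = (if a = b then 1 else 0)"
    using ij by (simp add: sum_subtractf elementary_def)
  finally show "(\<Sum>l\<in>UNIV. ?h a l * elementary i j l b) = (if a = b then 1 else 0)" .
qed

lemma act_diag_scale:
  "act (diag_scale i0 c) f =
    (\<Sum>m\<in>Poly_Mapping.keys f. Poly_Mapping.single m (Poly_Mapping.lookup f m * c ^ Poly_Mapping.lookup m i0))"
proof -
  have "linear_form (diag_scale i0 c) k = cst (diag_scale i0 c k k) * var k" for k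
    unfolding linear_form_def by (subst sum.remove[of _ k]) (auto simp: diag_scale_def intro!: sum.neutral)
  moreover have "(\<Prod>i\<in>UNIV. diag_scale i0 c i i ^ Poly_Mapping.lookup m i) = c ^ Poly_Mapping.lookup m i0" for m
    by (subst prod.remove[of _ i0]) (auto simp: diag_scale_def intro!: prod.neutral)
  ultimately have "eval_monom (linear_form (diag_scale i0 c)) m = cst (c ^ Poly_Mapping.lookup m i0) * monomial_x m" for m
    by (simp add: eval_monom_def power_mult_distrib prod.distrib prod_var_power flip: cst_power cst_prod)
  then show ?thesis
    unfolding act_eq_eval_mpoly eval_mpoly_def
    by (intro sum.cong) (simp_all add: monomial_x_def cst_mult_single mult.assoc flip: cst_mult)
qed

lemma infinite_UNIV_alg_closed: "infinite (UNIV :: 'k::alg_closed_field set)"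
proof
  assume fin: "finite (UNIV :: 'k set)"
  define Q :: "'k poly" where "Q = (\<Prod>a\<in>UNIV. [:-a, 1:])"
  have "degree Q = card (UNIV :: 'k set)"
    unfolding Q_def by (subst degree_prod_eq_sum_degree) auto
  moreover have "card (UNIV :: 'k set) > 0"
    using fin by (simp add: card_gt_0_iff)
  ultimately have "degree (Q + 1) > 0"
    by (subst degree_add_eq_left) simp_all
  then obtain x where "poly (Q + 1) x = 0"
    using alg_closed_imp_poly_has_root by blast
  moreover have "poly Q x = 0"
    unfolding Q_def poly_prod using fin by (intro prod_zero) auto
  ultimately show False
    by simp
qed

lemma finite_roots_of_unity:
  assumes "n > 0"
  shows "finite {x :: 'k::field. x ^ n = 1}"
proof -
  have "coeff (monom (1::'k) n - 1) n = 1"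
    using assms by simp
  then have "monom (1::'k) n - 1 \<noteq> 0"
    by (metis coeff_0 zero_neq_one)
  then have "finite {x. poly (monom (1::'k) n - 1) x = 0}"
    by (rule poly_roots_finite)
  then show ?thesis
    by (simp add: poly_monom)
qed

lemma exists_power_separating:
  assumes "infinite (UNIV :: 'k::field set)"
  shows "\<exists>c::'k. c \<noteq> 0 \<and> (\<forall>e\<le>D. c ^ e \<noteq> c ^ Suc D)"
proof -
  have "finite ({0} \<union> (\<Union>e\<le>D. {x :: 'k. x ^ (Suc D - e) = 1}))"
    by (auto intro!: finite_roots_of_unity)
  then obtain c :: 'k where c: "c \<notin> {0} \<union> (\<Union>e\<le>D. {x. x ^ (Suc D - e) = 1})"
    using ex_new_if_finite[OF assms] by blast
  have "c ^ e \<noteq> c ^ Suc D" if "e \<le> D" for e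
  proof
    assume "c ^ e = c ^ Suc D"
    also have "c ^ Suc D = c ^ e * c ^ (Suc D - e)"
      using that by (simp flip: power_add)
    finally have "c ^ (Suc D - e) = 1"
      using c by simp
    then show False
      using c that by auto
  qed
  then show ?thesis
    using c by blast
qed

(* Subtracting c^(D+1) times the sum for l from the sum for c * l cancels the top term. *)
lemma scaled_sums_drop_top:
  fixes F :: "nat \<Rightarrow> ('n, 'k::field) mpoly"
  assumes I: "is_ideal I" and sums: "\<And>c. c \<noteq> 0 \<Longrightarrow> (\<Sum>e\<le>Suc D. cst (c ^ e) * F e) \<in> I"
    and c: "c \<noteq> 0" and l: "l \<noteq> 0"
  shows "(\<Sum>e\<le>D. cst (l ^ e) * (cst (c ^ e - c ^ Suc D) * F e)) \<in> I"
proof -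
  define F' where "F' e = cst (c ^ e - c ^ Suc D) * F e" for e
  have scaled: "cst ((c * l) ^ e) * F e - cst (c ^ Suc D) * (cst (l ^ e) * F e) = cst (l ^ e) * F' e" for e
    by (simp add: F'_def cst_mult cst_diff power_mult_distrib algebra_simps)
  have "(\<Sum>e\<le>Suc D. cst ((c * l) ^ e) * F e) - cst (c ^ Suc D) * (\<Sum>e\<le>Suc D. cst (l ^ e) * F e) =
      (\<Sum>e\<le>Suc D. cst ((c * l) ^ e) * F e - cst (c ^ Suc D) * (cst (l ^ e) * F e))"
    by (simp only: sum_distrib_left sum_subtractf)
  also have "\<dots> = (\<Sum>e\<le>Suc D. cst (l ^ e) * F' e)"
    by (simp only: scaled)
  also have "\<dots> = (\<Sum>e\<le>D. cst (l ^ e) * F' e)"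
    by (simp add: F'_def)
  finally have eq: "(\<Sum>e\<le>Suc D. cst ((c * l) ^ e) * F e) - cst (c ^ Suc D) * (\<Sum>e\<le>Suc D. cst (l ^ e) * F e) =
      (\<Sum>e\<le>D. cst (l ^ e) * F' e)" .
  have "(\<Sum>e\<le>Suc D. cst ((c * l) ^ e) * F e) \<in> I"
    by (rule sums) (use c l in simp)
  moreover have "cst (c ^ Suc D) * (\<Sum>e\<le>Suc D. cst (l ^ e) * F e) \<in> I"
    by (rule ideal_mult[OF I sums[OF l]])
  ultimately show ?thesis
    unfolding F'_def[symmetric] eq[symmetric] by (rule ideal_diff[OF I])
qed

lemma mem_ideal_if_scaled_sums_mem:
  fixes F :: "nat \<Rightarrow> ('n, 'k::field) mpoly"
  assumes I: "is_ideal I" and inf: "infinite (UNIV :: 'k set)"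
  shows "(\<And>c. c \<noteq> 0 \<Longrightarrow> (\<Sum>e\<le>D. cst (c ^ e) * F e) \<in> I) \<Longrightarrow> e \<le> D \<Longrightarrow> F e \<in> I"
proof (induction D arbitrary: F e)
  case 0
  then show ?case
    using "0.prems"(1)[of 1] by simp
next
  case (Suc D)
  obtain c :: 'k where c0: "c \<noteq> 0" and c: "\<And>e. e \<le> D \<Longrightarrow> c ^ e \<noteq> c ^ Suc D"
    using exists_power_separating[OF inf] by blast
  have low: "F e \<in> I" if "e \<le> D" for e
  proof -
    have "cst (c ^ e - c ^ Suc D) * F e \<in> I"
      using Suc.IH[OF scaled_sums_drop_top[OF I Suc.prems(1) c0] that] by blast
    then have "cst (inverse (c ^ e - c ^ Suc D)) * (cst (c ^ e - c ^ Suc D) * F e) \<in> I"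
      using I by (simp add: ideal_mult)
    then show ?thesis
      using c[OF that] by (simp add: mult.assoc[symmetric] flip: cst_mult)
  qed
  show ?case
  proof (cases "e \<le> D")
    case False
    then have e: "e = Suc D"
      using Suc.prems(2) by simp
    have "(\<Sum>e\<le>D. F e) + F (Suc D) \<in> I"
      using Suc.prems(1)[of 1] by simp
    moreover have "(\<Sum>e\<le>D. F e) \<in> I"
      using low I by (intro ideal_sum) auto
    ultimately have "(\<Sum>e\<le>D. F e) + F (Suc D) - (\<Sum>e\<le>D. F e) \<in> I"
      by (rule ideal_diff[OF I])
    then show ?thesis
      using e by simp
  qed (rule low)
qed

lemma lookup_cst_mult: "Poly_Mapping.lookup (cst c * g) m = c * Poly_Mapping.lookup g m"
  by (simp add: cst_def flip: mult_map_scale_conv_mult) (simp add: map.rep_eq when_def)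

lemma lookup_act_diag_scale:
  "Poly_Mapping.lookup (act (diag_scale i0 c) f) m = c ^ Poly_Mapping.lookup m i0 * Poly_Mapping.lookup f m"
  by (simp add: act_diag_scale lookup_sum lookup_single when_def in_keys_iff mult.commute)

definition poly_part :: "(('n \<Rightarrow>\<^sub>0 nat) \<Rightarrow> bool) \<Rightarrow> ('n, 'k::field) mpoly \<Rightarrow> ('n, 'k) mpoly" where
  "poly_part P f = (\<Sum>m\<in>{m \<in> Poly_Mapping.keys f. P m}. Poly_Mapping.single m (Poly_Mapping.lookup f m))"

lemma lookup_poly_part: "Poly_Mapping.lookup (poly_part P f) m = (if P m then Poly_Mapping.lookup f m else 0)"
  by (simp add: poly_part_def lookup_sum lookup_single when_def in_keys_iff)

lemma poly_part_poly_part: "poly_part P (poly_part Q f) = poly_part (\<lambda>m. P m \<and> Q m) f"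
  by (rule poly_mapping_eqI) (simp add: lookup_poly_part)

lemma act_diag_scale_eq_sum_parts:
  assumes "\<And>m. m \<in> Poly_Mapping.keys f \<Longrightarrow> Poly_Mapping.lookup m i0 \<le> D"
  shows "act (diag_scale i0 c) f = (\<Sum>e\<le>D. cst (c ^ e) * poly_part (\<lambda>m. Poly_Mapping.lookup m i0 = e) f)"
proof (rule poly_mapping_eqI)
  fix m
  show "Poly_Mapping.lookup (act (diag_scale i0 c) f) m =
      Poly_Mapping.lookup (\<Sum>e\<le>D. cst (c ^ e) * poly_part (\<lambda>m. Poly_Mapping.lookup m i0 = e) f) m"
    using assms[of m] by (auto simp: lookup_act_diag_scale lookup_sum lookup_cst_mult lookup_poly_part in_keys_iff
        if_distrib[of "\<lambda>x. _ * x"] cong: if_cong)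
qed

lemma poly_part_mem_invariant_ideal:
  fixes I :: "('n::finite, 'k::field) mpoly set"
  assumes I: "is_ideal I" and inf: "infinite (UNIV :: 'k set)" and inv: "GL_invariant I" and f: "f \<in> I"
  shows "poly_part (\<lambda>m. Poly_Mapping.lookup m i0 = e) f \<in> I"
proof -
  define D where "D = Max (insert e ((\<lambda>m. Poly_Mapping.lookup m i0) ` Poly_Mapping.keys f))"
  have bound: "Poly_Mapping.lookup m i0 \<le> D" if "m \<in> Poly_Mapping.keys f" for m
    using that by (simp add: D_def)
  show ?thesis
  proof (rule mem_ideal_if_scaled_sums_mem[OF I inf])
    fix c :: 'k
    assume "c \<noteq> 0"
    then have "act (diag_scale i0 c) f \<in> I"
      using inv f diag_scale_GL unfolding GL_invariant_def by blast
    then show "(\<Sum>e\<le>D. cst (c ^ e) * poly_part (\<lambda>m. Poly_Mapping.lookup m i0 = e) f) \<in> I"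
      by (simp only: act_diag_scale_eq_sum_parts[OF bound])
  qed (simp add: D_def)
qed

lemma monomial_mem_invariant_ideal:
  fixes I :: "('n::finite, 'k::field) mpoly set"
  assumes I: "is_ideal I" and inf: "infinite (UNIV :: 'k set)" and inv: "GL_invariant I"
    and f: "f \<in> I" and m: "m \<in> Poly_Mapping.keys f"
  shows "monomial_x m \<in> I"
proof -
  have parts: "poly_part (\<lambda>x. \<forall>i\<in>V. Poly_Mapping.lookup x i = Poly_Mapping.lookup m i) f \<in> I" if "finite V" for V
    using that
  proof (induction V rule: finite_induct)
    case empty
    have "poly_part (\<lambda>_. True) f = f"
      by (rule poly_mapping_eqI) (simp add: lookup_poly_part)
    then show ?case
      using f by simp
  next
    case (insert a V)
    then show ?case
      using poly_part_mem_invariant_ideal[OF I inf inv insert.IH, of a "Poly_Mapping.lookup m a"]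
      by (simp add: poly_part_poly_part)
  qed
  have "(\<lambda>x. \<forall>i\<in>UNIV. Poly_Mapping.lookup x i = Poly_Mapping.lookup m i) = (\<lambda>x. x = m)"
    by (auto intro: poly_mapping_eqI)
  then have "poly_part (\<lambda>x. x = m) f \<in> I"
    using parts[of UNIV] by simp
  moreover have "poly_part (\<lambda>x. x = m) f = cst (Poly_Mapping.lookup f m) * monomial_x m"
    by (rule poly_mapping_eqI) (simp add: lookup_poly_part lookup_cst_mult monomial_x_def lookup_single when_def)
  ultimately have "cst (inverse (Poly_Mapping.lookup f m)) * (cst (Poly_Mapping.lookup f m) * monomial_x m) \<in> I"
    using I by (simp add: ideal_mult)
  then show ?thesis
    using m by (simp add: mult.assoc[symmetric] in_keys_iff flip: cst_mult)
qed

section \<open>Invariant ideals are closed under digit moves\<close>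

lemma coeff_monom_plus_one_power:
  assumes "d > 0"
  shows "coeff ((monom 1 d + 1) ^ q) v = (if d dvd v then of_nat (q choose (v div d)) else (0 :: 'a::comm_ring_1))"
proof -
  have expansion: "(monom 1 d + 1) ^ q = (\<Sum>s\<le>q. monom (of_nat (q choose s)) (d * s) :: 'a poly)"
    by (simp add: binomial_ring monom_power of_nat_monom mult_monom mult.commute)
  have "coeff ((monom 1 d + 1) ^ q) v = coeff (\<Sum>s\<le>q. monom (of_nat (q choose s)) (d * s) :: 'a poly) v"
    by (simp only: expansion)
  also have "\<dots> = (\<Sum>s\<le>q. if d * s = v then of_nat (q choose s) else 0)"
    by (simp only: coeff_sum coeff_monom)
  also have "\<dots> = (\<Sum>s\<le>q. if s = v div d \<and> d dvd v then of_nat (q choose s) else 0)"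
    using assms by (intro sum.cong) auto
  also have "\<dots> = (if d dvd v then of_nat (q choose (v div d)) else 0)"
    by (auto simp: binomial_eq_0 not_le)
  finally show ?thesis .
qed

lemma coeff_binomial_times_power:
  assumes P: "P > 0" and r: "r < P"
  shows "coeff ((monom 1 1 + 1) ^ r * (monom 1 P + 1) ^ q) P = (of_nat q :: 'a::comm_ring_1)"
proof -
  let ?X = "monom 1 1 + 1 :: 'a poly"
  have "coeff (?X ^ r * (monom 1 P + 1) ^ q) P = (\<Sum>i\<le>P. coeff (?X ^ r) i * coeff ((monom 1 P + 1) ^ q) (P - i))"
    by (rule coeff_mult)
  also have "\<dots> = (\<Sum>i\<in>{0}. coeff (?X ^ r) i * coeff ((monom 1 P + 1) ^ q) (P - i))"
  proof (rule sum.mono_neutral_right)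
    show "\<forall>i\<in>{..P} - {0}. coeff (?X ^ r) i * coeff ((monom 1 P + 1) ^ q) (P - i) = 0"
    proof
      fix i assume i: "i \<in> {..P} - {0}"
      show "coeff (?X ^ r) i * coeff ((monom 1 P + 1) ^ q) (P - i) = 0"
      proof (cases "i = P")
        case True
        then show ?thesis
          using r by (simp add: coeff_monom_plus_one_power binomial_eq_0)
      next
        case False
        then have "\<not> P dvd P - i"
          using i by (auto dest: dvd_imp_le)
        then show ?thesis
          using P by (simp add: coeff_monom_plus_one_power)
      qed
    qed
  qed auto
  also have "\<dots> = of_nat q"
    using P by (simp add: coeff_monom_plus_one_power)
  finally show ?thesis .
qed

lemma of_nat_choose_prime_power:
  assumes pr: "prime p" and char: "CHAR('k::field) = p"
  shows "(of_nat (n choose p ^ c) :: 'k) = of_nat (n div p ^ c)"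
proof -
  define P where "P = p ^ c"
  have P: "P > 0"
    using pr by (simp add: P_def prime_gt_0_nat)
  let ?X = "monom 1 1 + 1 :: 'k poly"
  have frobenius: "?X ^ P = monom 1 P + 1"
    using freshmans_dream'[where x = "monom 1 1 :: 'k poly" and y = 1 and m = P and n = c] pr char
    by (simp add: P_def monom_power)
  have "n = n mod P + P * (n div P)"
    by simp
  then have "?X ^ n = ?X ^ (n mod P) * (?X ^ P) ^ (n div P)"
    by (metis power_add power_mult)
  then have "?X ^ n = ?X ^ (n mod P) * (monom 1 P + 1) ^ (n div P)"
    by (simp only: frobenius)
  moreover have "(of_nat (n choose P) :: 'k) = coeff (?X ^ n) P"
    using coeff_monom_plus_one_power[where 'a = 'k, of 1 n P] by simp
  ultimately show ?thesis
    using coeff_binomial_times_power[OF P, of "n mod P" "n div P"] P by (simp add: P_def)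
qed

lemma binomial_prime_power_nonzero:
  assumes pr: "prime p" and char: "CHAR('k::field) = p" and digit: "digit p n c \<noteq> 0"
  shows "(of_nat (n choose p ^ c) :: 'k) \<noteq> 0"
proof -
  have "\<not> p dvd n div p ^ c"
    using digit by (simp add: digit_def dvd_eq_mod_eq_0)
  then show ?thesis
    using char by (simp add: of_nat_choose_prime_power[OF pr char] of_nat_eq_0_iff_char_dvd)
qed

lemma linear_form_elementary:
  assumes "i \<noteq> j"
  shows "linear_form (elementary i j) b = var b + (if b = j then var i else 0)"
proof -
  have "linear_form (elementary i j) b =
      (\<Sum>k\<in>UNIV. (if k = b then var b else 0) + (if k = i then (if b = j then var i else 0) else 0))"
    unfolding linear_form_def by (rule sum.cong) (auto simp: elementary_def cst_add distrib_right)
  then show ?thesis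
    by (simp add: sum.distrib)
qed

lemma act_elementary_monomial_x:
  fixes m :: "'n::finite \<Rightarrow>\<^sub>0 nat"
  assumes "i \<noteq> j"
  shows "act (elementary i j) (monomial_x m :: ('n, 'k::field) mpoly) =
    (var i + var j) ^ Poly_Mapping.lookup m j * monomial_x (m - Poly_Mapping.single j (Poly_Mapping.lookup m j))"
proof -
  define m0 where "m0 = m - Poly_Mapping.single j (Poly_Mapping.lookup m j)"
  have m0: "Poly_Mapping.lookup m0 b = (if b = j then 0 else Poly_Mapping.lookup m b)" for b
    by (simp add: m0_def lookup_minus lookup_single when_def)
  have "(\<Prod>b\<in>UNIV - {j}. linear_form (elementary i j) b ^ Poly_Mapping.lookup m b) =
      (\<Prod>b\<in>UNIV. (var b :: ('n, 'k) mpoly) ^ Poly_Mapping.lookup m0 b)"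
    by (subst (2) prod.remove[of _ j]) (simp_all add: linear_form_elementary[OF assms] m0)
  then show ?thesis
    using assms by (simp add: act_monomial_x eval_monom_def prod.remove[of _ j] prod_var_power
        linear_form_elementary add.commute flip: m0_def)
qed

lemma lookup_act_elementary_monomial_x:
  fixes m :: "'n::finite \<Rightarrow>\<^sub>0 nat"
  assumes ij: "i \<noteq> j" and t: "t \<le> Poly_Mapping.lookup m j"
  defines "m' \<equiv> Poly_Mapping.single i t + Poly_Mapping.single j (Poly_Mapping.lookup m j - t)
      + (m - Poly_Mapping.single j (Poly_Mapping.lookup m j))"
  shows "Poly_Mapping.lookup (act (elementary i j) (monomial_x m :: ('n, 'k::field) mpoly)) m' =
    of_nat (Poly_Mapping.lookup m j choose t)"
proof -
  define n m0 where "n = Poly_Mapping.lookup m j" and "m0 = m - Poly_Mapping.single j (Poly_Mapping.lookup m j)"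
  define X where "X s = Poly_Mapping.single i s + Poly_Mapping.single j (n - s) + m0" for s
  have "act (elementary i j) (monomial_x m :: ('n, 'k) mpoly) =
      (\<Sum>s\<le>n. of_nat (n choose s) * var i ^ s * var j ^ (n - s)) * monomial_x m0"
    by (simp add: act_elementary_monomial_x[OF ij] binomial_ring n_def m0_def)
  also have "\<dots> = (\<Sum>s\<le>n. cst (of_nat (n choose s)) * monomial_x (X s))"
    by (simp add: sum_distrib_left sum_distrib_right X_def var_power monomial_x_add mult_ac
        flip: cst_of_nat)
  finally have act: "act (elementary i j) (monomial_x m :: ('n, 'k) mpoly) =
      (\<Sum>s\<le>n. Poly_Mapping.single (X s) (of_nat (n choose s)))"
    by (simp add: single_eq_cst_mult_monomial)
  have "X s = X t \<longleftrightarrow> s = t" for s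
  proof
    assume "X s = X t"
    then have "Poly_Mapping.lookup (X s) i = Poly_Mapping.lookup (X t) i"
      by simp
    then show "s = t"
      using ij by (simp add: X_def lookup_add lookup_single)
  qed simp
  then show ?thesis
    using t by (simp add: act lookup_sum lookup_single when_def m'_def X_def n_def m0_def)
qed

lemma monomial_mem_if_digit_move:
  fixes I :: "('n::finite, 'k::field) mpoly set"
  assumes I: "is_ideal I" and inf: "infinite (UNIV :: 'k set)" and inv: "GL_invariant I"
    and pr: "prime p" and char: "CHAR('k) = p"
    and m: "monomial_x m \<in> I" and move: "digit_move p (Poly_Mapping.lookup m) (Poly_Mapping.lookup m')"
  shows "monomial_x m' \<in> I"
proof -
  obtain i j c where ij: "i \<noteq> j" and j: "digit p (Poly_Mapping.lookup m j) c \<noteq> 0"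
    and m': "Poly_Mapping.lookup m' = move (Poly_Mapping.lookup m) i j (p ^ c)"
    using move unfolding digit_move_def by blast
  have le: "p ^ c \<le> Poly_Mapping.lookup m j"
    using digit_diff_mult_power(1)[of p 1 "Poly_Mapping.lookup m j" c] j pr by (simp add: prime_gt_0_nat)
  have "m' = Poly_Mapping.single i (p ^ c) + Poly_Mapping.single j (Poly_Mapping.lookup m j - p ^ c)
      + (m - Poly_Mapping.single j (Poly_Mapping.lookup m j))"
    by (rule poly_mapping_eqI) (use ij in \<open>auto simp: m' move_def lookup_add lookup_minus lookup_single\<close>)
  then have "m' \<in> Poly_Mapping.keys (act (elementary i j) (monomial_x m :: ('n, 'k) mpoly))"
    using lookup_act_elementary_monomial_x[where 'k = 'k, OF ij le] binomial_prime_power_nonzero[OF pr char j]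
    by (simp add: in_keys_iff)
  moreover have "act (elementary i j) (monomial_x m) \<in> I"
    using inv elementary_GL[OF ij] m unfolding GL_invariant_def by blast
  ultimately show ?thesis
    using monomial_mem_invariant_ideal[OF I inf inv] by blast
qed

lemma monomial_mem_if_digit_moves:
  fixes I :: "('n::finite, 'k::field) mpoly set"
  assumes I: "is_ideal I" and inf: "infinite (UNIV :: 'k set)" and inv: "GL_invariant I"
    and pr: "prime p" and char: "CHAR('k) = p"
    and moves: "(digit_move p)\<^sup>*\<^sup>* (Poly_Mapping.lookup m) (Poly_Mapping.lookup m')" and m: "monomial_x m \<in> I"
  shows "monomial_x m' \<in> I"
proof -
  have "monomial_x m' \<in> I" if "(digit_move p)\<^sup>*\<^sup>* (Poly_Mapping.lookup m) g" "Poly_Mapping.lookup m' = g" for g m'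
    using that
  proof (induction arbitrary: m' rule: rtranclp_induct)
    case base
    then show ?case
      using m by (metis poly_mapping_eqI)
  next
    case (step g h)
    have "Poly_Mapping.lookup (Abs_poly_mapping g) = g"
      by (rule lookup_Abs_poly_mapping) simp
    then show ?case
      using step monomial_mem_if_digit_move[OF I inf inv pr char] by metis
  qed
  then show ?thesis
    using moves by blast
qed

section \<open>Finite generation\<close>

lemma dickson_lemma:
  fixes M :: "('n \<Rightarrow>\<^sub>0 nat) set"
  assumes "finite V"
  shows "\<exists>F\<subseteq>M. finite F \<and> (\<forall>m\<in>M. \<exists>f\<in>F. \<forall>k\<in>V. Poly_Mapping.lookup f k \<le> Poly_Mapping.lookup m k)"
  using assms
proof (induction V arbitrary: M rule: finite_induct)
  case empty
  show ?case
    by (cases "M = {}") (auto intro!: exI[of _ "{SOME m. m \<in> M}"] some_in_eq[THEN iffD2])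
next
  case (insert a V)
  from insert.IH obtain \<Phi> :: "('n \<Rightarrow>\<^sub>0 nat) set \<Rightarrow> ('n \<Rightarrow>\<^sub>0 nat) set" where
    \<Phi>: "\<And>M. \<Phi> M \<subseteq> M \<and> finite (\<Phi> M) \<and> (\<forall>m\<in>M. \<exists>f\<in>\<Phi> M. \<forall>k\<in>V. Poly_Mapping.lookup f k \<le> Poly_Mapping.lookup m k)"
    by metis
  define K where "K = Max ((\<lambda>f. Poly_Mapping.lookup f a) ` \<Phi> M)"
  define F where "F = \<Phi> M \<union> (\<Union>v<K. \<Phi> {m\<in>M. Poly_Mapping.lookup m a = v})"
  have "\<exists>f\<in>F. \<forall>k\<in>insert a V. Poly_Mapping.lookup f k \<le> Poly_Mapping.lookup m k" if m: "m \<in> M" for m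
  proof (cases "K \<le> Poly_Mapping.lookup m a")
    case True
    obtain f where f: "f \<in> \<Phi> M" "\<forall>k\<in>V. Poly_Mapping.lookup f k \<le> Poly_Mapping.lookup m k"
      using \<Phi> m by blast
    have "Poly_Mapping.lookup f a \<le> K"
      unfolding K_def using f(1) \<Phi> by (intro Max_ge) auto
    with f True show ?thesis
      unfolding F_def by (intro bexI[of _ f]) auto
  next
    case False
    obtain f where f: "f \<in> \<Phi> {m'\<in>M. Poly_Mapping.lookup m' a = Poly_Mapping.lookup m a}"
      "\<forall>k\<in>V. Poly_Mapping.lookup f k \<le> Poly_Mapping.lookup m k"
      using \<Phi> m by blast
    then have "Poly_Mapping.lookup f a = Poly_Mapping.lookup m a"
      using \<Phi> by blast
    then show ?thesis
      using f False unfolding F_def by (intro bexI[of _ f]) auto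
  qed
  moreover have "F \<subseteq> M" "finite F"
    using \<Phi> unfolding F_def by auto
  ultimately show ?case
    by blast
qed

lemma carry_ideal_subset_invariant_ideal:
  fixes I :: "('n::finite, 'k::field) mpoly set"
  assumes I: "is_ideal I" and inf: "infinite (UNIV :: 'k set)" and inv: "GL_invariant I"
    and pr: "prime p" and char: "CHAR('k) = p" and f: "monomial_x f \<in> I"
  shows "carry_ideal p (mdeg f) (carry p f) \<subseteq> I"
  unfolding carry_ideal_def
proof (rule ideal_gen_least[OF I], safe)
  fix b :: "'n \<Rightarrow>\<^sub>0 nat"
  assume deg: "mdeg b = mdeg f" and le: "carry p b \<le> carry p f"
  have p: "p > 1"
    using pr by (rule prime_gt_1_nat)
  have "sum (Poly_Mapping.lookup f) UNIV = sum (Poly_Mapping.lookup b) UNIV"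
    using deg by (simp add: mdeg_def)
  moreover have "low_sum p (Poly_Mapping.lookup b) l \<le> low_sum p (Poly_Mapping.lookup f) l" for l
    using le carry_le_iff_low_sum_le[OF p deg] by blast
  ultimately have "(digit_move p)\<^sup>*\<^sup>* (Poly_Mapping.lookup f) (Poly_Mapping.lookup b)"
    by (rule digit_moves_if_low_sums_le[OF p])
  then show "monomial_x b \<in> I"
    using monomial_mem_if_digit_moves[OF I inf inv pr char] f by blast
qed

lemma invariant_ideal_eq_carry_sum_ideal:
  fixes I :: "('n::finite, 'k::field) mpoly set"
  assumes I: "is_ideal I" and inf: "infinite (UNIV :: 'k set)" and inv: "GL_invariant I"
    and pr: "prime p" and char: "CHAR('k) = p"
    and F: "\<And>f. f \<in> F \<Longrightarrow> monomial_x f \<in> I"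
    and dominated: "\<And>m. monomial_x m \<in> I \<Longrightarrow> \<exists>f\<in>F. \<forall>k. Poly_Mapping.lookup f k \<le> Poly_Mapping.lookup m k"
  shows "I = carry_sum_ideal p ((\<lambda>m. (mdeg m, carry p m)) ` F)"
proof
  let ?J = "carry_sum_ideal p ((\<lambda>m. (mdeg m, carry p m)) ` F) :: ('n, 'k) mpoly set"
  have J: "is_ideal ?J"
    unfolding carry_sum_ideal_def by (rule is_ideal_ideal_gen)
  have carry_ideal_J: "carry_ideal p (mdeg f) (carry p f) \<subseteq> ?J" if "f \<in> F" for f
    unfolding carry_sum_ideal_def using that by (intro subset_trans[OF _ ideal_gen_subset]) auto
  show "I \<subseteq> ?J"
  proof
    fix h assume h: "h \<in> I"
    show "h \<in> ?J"
    proof (rule mem_ideal_if_monomials_mem[OF J])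
      fix m assume "m \<in> Poly_Mapping.keys h"
      then have "monomial_x m \<in> I"
        by (rule monomial_mem_invariant_ideal[OF I inf inv h])
      then obtain f where f: "f \<in> F" "\<forall>k. Poly_Mapping.lookup f k \<le> Poly_Mapping.lookup m k"
        using dominated by blast
      have "monomial_x f \<in> carry_ideal p (mdeg f) (carry p f)"
        unfolding carry_ideal_def by (rule ideal_gen_subset[THEN subsetD]) blast
      then have "monomial_x f \<in> ?J"
        using carry_ideal_J[OF f(1)] by blast
      then have "monomial_x (m - f) * monomial_x f \<in> ?J"
        by (rule ideal_mult[OF J])
      moreover have "(m - f) + f = m"
        by (rule poly_mapping_eqI) (use f(2) in \<open>simp add: lookup_add lookup_minus\<close>)
      ultimately show "monomial_x m \<in> ?J"
        by (simp flip: monomial_x_add)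
    qed
  qed
  have "carry_ideal p d c \<subseteq> I" if "(d, c) \<in> (\<lambda>m. (mdeg m, carry p m)) ` F" for d c
    using that carry_ideal_subset_invariant_ideal[OF I inf inv pr char F] by blast
  then show "?J \<subseteq> I"
    unfolding carry_sum_ideal_def by (intro ideal_gen_least[OF I]) auto
qed

lemma GL_invariant_imp_carry_sum_ideal:
  fixes I :: "('n::finite, 'k::field) mpoly set"
  assumes I: "is_ideal I" and inf: "infinite (UNIV :: 'k set)" and inv: "GL_invariant I"
    and pr: "prime p" and char: "CHAR('k) = p"
  shows "\<exists>B. finite B \<and> B \<subseteq> all_carry_patterns TYPE('n) p \<and> I = carry_sum_ideal p B"
proof -
  obtain F where F: "F \<subseteq> {m. monomial_x m \<in> I}" "finite F"
    and dominated: "\<forall>m\<in>{m. monomial_x m \<in> I}. \<exists>f\<in>F. \<forall>k. Poly_Mapping.lookup f k \<le> Poly_Mapping.lookup m k"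
    using dickson_lemma[OF finite_UNIV, of "{m. monomial_x m \<in> I}"] by auto
  have "I = carry_sum_ideal p ((\<lambda>m. (mdeg m, carry p m)) ` F)"
  proof (rule invariant_ideal_eq_carry_sum_ideal[OF I inf inv pr char])
    show "monomial_x f \<in> I" if "f \<in> F" for f
      using F(1) that by blast
    show "\<exists>f\<in>F. \<forall>k. Poly_Mapping.lookup f k \<le> Poly_Mapping.lookup m k" if "monomial_x m \<in> I" for m
      using dominated that by simp
  qed
  moreover have "(\<lambda>m. (mdeg m, carry p m)) ` F \<subseteq> all_carry_patterns TYPE('n) p"
    by (auto simp: all_carry_patterns_def carry_patterns_def)
  ultimately show ?thesis
    using F(2) by (intro exI[where x = "(\<lambda>m. (mdeg m, carry p m)) ` F"]) simp
qed

theorem theorem3: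
  fixes I :: "('n::finite, 'k::alg_closed_field) mpoly set"
    and p :: nat
  assumes "CHAR('k) = p" and "p > 0"
    and "is_ideal I"
  shows "GL_invariant I \<longleftrightarrow>
    (\<exists>B. finite B \<and> B \<subseteq> all_carry_patterns TYPE('n) p \<and> I = carry_sum_ideal p B)"
proof -
  have pr: "prime p"
    using assms(1,2) prime_CHAR_semidom[where 'a = 'k] by simp
  show ?thesis
    using GL_invariant_imp_carry_sum_ideal[OF assms(3) infinite_UNIV_alg_closed _ pr assms(1)]
      GL_invariant_carry_sum_ideal[OF pr assms(1)] by blast
qed

end
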